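(* Consider the setting and algorithm described in the context. Let $\gamma>0$ and $K_0\ge0$ be such that for all $k\ge K_0$: $\gamma_k=\gamma$, $\delta_k=\delta:=2\nu+L_{\nabla h}+\frac{2\|A\|^2}{\gamma}$ and $\|z^{k+1}\|\le\min\left(\frac{\varepsilon}{\gamma},\sqrt{\frac{2\varepsilon}{\gamma}}\right)$. Let $0<m\le M$ be constants with $m<f(Kx^k)\le M$ for all $k\ge1$, and let $K_1\ge K_0+1$ be such that $m\le\langle Kx^k,y^k\rangle-f^*(y^k)\le f(Kx^k)\le M$ for all $k\ge K_1$. Let $\Gamma(x,y,z,u):=\frac{\Psi(x,z,u,\delta,\gamma)}{\langle Kx,y\rangle-f^*(y)}$ on $\{(x,y)\in\mathbb{R}^n\times\operatorname{dom}f^*:\langle Kx,y\rangle-f^*(y)>m/2\}\times\operatorname{dom}g^*\times\mathbb{R}^n$. Suppose that $f^*$ is calm at every point of its effective domain and that $g$ is essentially strictly convex. Then there exists $\zeta>0$ such that for all $k\ge K_1$, $\operatorname{dist}\big(0,\partial\Gamma(x^{k+1},y^{k+1},z^{k+1},u^{k+1})\big)\le\zeta\big(\|x^k-x^{k+1}\|+\|u^k-u^{k+1}\|+\|z^k-z^{k+1}\|\big)$, where $\partial$ denotes the limiting subdifferential.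
   Context: Setting: $\mathcal{S}\subseteq\mathbb{R}^n$ nonempty, convex, compact; $A:\mathbb{R}^n\to\mathbb{R}^s$, $K:\mathbb{R}^n\to\mathbb{R}^p$ linear with adjoints $A^*,K^*$ and operator norm $\|A\|$; $g:\mathbb{R}^s\to\mathbb{R}\cup\{+\infty\}$ proper, convex, lsc; $h:\mathbb{R}^n\to\mathbb{R}$ differentiable on an open set containing $\mathcal{S}$ with $L_{\nabla h}$-Lipschitz gradient there; $f:\mathbb{R}^p\to\mathbb{R}\cup\{+\infty\}$ proper, convex, lsc with $K(\mathcal{S})\subseteq\operatorname{int}(\operatorname{dom}f)$ and $f(Kx)>0$ on $\mathcal{S}$; $\mathcal{S}\cap A^{-1}(\operatorname{dom}g)\ne\emptyset$, $\inf_{x\in\mathcal{S}}\{g(Ax)+h(x)\}>0$; $A(\mathcal{S})\subseteq\operatorname{dom}(\partial g)$ and there is $\ell>0$ with $\operatorname{dist}(0,\partial g(Ax))\le\ell$ for all $x\in\mathcal{S}$. Notation: $f^*,g^*$ Fenchel conjugates; $\iota_{\mathcal{S}}$ indicator; $\operatorname{Proj}_{\mathcal{S}}$ projection; $\operatorname{prox}_{\varphi,\kappa}(x)=\arg\min_y\{\varphi(y)+\frac1{2\kappa}\|y-x\|^2\}$; $\Psi(x,z,u,\delta,\gamma):=\langle z,Ax\rangle-g^*(z)+h(x)+\iota_{\mathcal{S}}(x)+\frac{\delta}{2}\|x-u\|^2-\frac{\gamma}{2}\|z\|^2$. A function $\varphi$ is calm at $\hat y\in\operatorname{dom}\varphi$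 if there are $\epsilon,\kappa>0$ with $|\varphi(y)-\varphi(\hat y)|\le\kappa\|y-\hat y\|$ whenever $\|y-\hat y\|<\epsilon$. A proper function is essentially strictly convex if it is strictly convex on every convex subset of $\operatorname{dom}(\partial g)$. Algorithm: given $0<\beta<2$, $\nu>0$, $0<q<1$, $\delta_0,\theta_0>0$, $\gamma_0=1$, $\varepsilon>0$ and $(x^0,z^0,u^0)$, for $k\ge0$: choose $y^{k+1}\in\partial f(Kx^k)$; $x^{k+1}:=\operatorname{Proj}_{\mathcal{S}}(u^k+\frac{\theta_k}{\delta_k}K^*y^{k+1}-\frac1{\delta_k}\nabla h(x^k)-\frac1{\delta_k}A^*z^k)$; $u^{k+1}:=(1-\beta)u^k+\beta x^{k+1}$; take the smallest $j_k\ge0$ such that with $\gamma_{k,j_k}:=\gamma_kq^{j_k}$, $z^{k+1,j_k}:=\operatorname{prox}_{g^*,1/\gamma_{k,j_k}}(Ax^{k+1}/\gamma_{k,j_k})$ one has $\theta_{k+1}:=\Psi(x^{k+1},z^{k+1,j_k},u^{k+1},\delta_k,\gamma_{k,j_k})/f(Kx^{k+1})>0$; set $\gamma_{k+1}:=\gamma_{k,j_k}$, $\delta_{k+1}:=2\nu+L_{\nabla h}+2\|A\|^2/\gamma_{k+1}$, $z^{k+1}:=z^{k+1,j_k}$; if $\|z^{k+1}\|>\min(\varepsilon/\gamma_{k+1},\sqrt{2\varepsilon/\gamma_{k+1}})$, replace $\gamma_{k+1}$ by $\gamma_{k+1}q$ and recompute $\delta_{k+1}$ by the same formula. *)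

theory Defs
  imports "HOL-Analysis.Analysis" "HOL-Library.Extended_Real"
begin

definition edom :: "('a \<Rightarrow> ereal) \<Rightarrow> 'a set" where
  "edom \<phi> = {x. \<phi> x < \<infinity>}"

definition proper_fun :: "('a \<Rightarrow> ereal) \<Rightarrow> bool" where
  "proper_fun \<phi> \<longleftrightarrow> (\<exists>x. \<phi> x < \<infinity>) \<and> (\<forall>x. \<phi> x > -\<infinity>)"

definition convex_fun :: "('a::real_vector \<Rightarrow> ereal) \<Rightarrow> bool" where
  "convex_fun \<phi> \<longleftrightarrow> (\<forall>x y t. 0 \<le> t \<and> t \<le> 1 \<longrightarrow>
      \<phi> (t *\<^sub>R x + (1 - t) *\<^sub>R y) \<le> ereal t * \<phi> x + ereal (1 - t) * \<phi> y)"

definition lsc_fun :: "('a::topological_space \<Rightarrow> ereal) \<Rightarrow> bool" where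
  "lsc_fun \<phi> \<longleftrightarrow> (\<forall>x. \<phi> x \<le> Liminf (at x) \<phi>)"

definition fconj :: "('a::real_inner \<Rightarrow> ereal) \<Rightarrow> 'a \<Rightarrow> ereal" where
  "fconj \<phi> y = (SUP x. ereal (inner x y) - \<phi> x)"

definition csubdiff :: "('a::real_inner \<Rightarrow> ereal) \<Rightarrow> 'a \<Rightarrow> 'a set" where
  "csubdiff \<phi> x = (if \<bar>\<phi> x\<bar> \<noteq> \<infinity> then {v. \<forall>w. \<phi> w \<ge> \<phi> x + ereal (inner v (w - x))} else {})"

definition fsubdiff :: "('a::real_inner \<Rightarrow> ereal) \<Rightarrow> 'a \<Rightarrow> 'a set" where
  "fsubdiff \<phi> x = (if \<bar>\<phi> x\<bar> \<noteq> \<infinity> then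
     {v. \<forall>e>0. \<exists>d>0. \<forall>w. norm (w - x) < d \<longrightarrow>
          \<phi> w \<ge> \<phi> x + ereal (inner v (w - x) - e * norm (w - x))} else {})"

definition lsubdiff :: "('a::real_inner \<Rightarrow> ereal) \<Rightarrow> 'a \<Rightarrow> 'a set" where
  "lsubdiff \<phi> x = (if \<bar>\<phi> x\<bar> \<noteq> \<infinity> then
     {v. \<exists>ws vs. ws \<longlonglongrightarrow> x \<and> (\<lambda>k. \<phi> (ws k)) \<longlonglongrightarrow> \<phi> x \<and>
          (\<forall>k. vs k \<in> fsubdiff \<phi> (ws k)) \<and> vs \<longlonglongrightarrow> v} else {})"

definition dist0 :: "'a::real_normed_vector set \<Rightarrow> ereal" where
  "dist0 C = (if C = {} then \<infinity> else ereal (infdist 0 C))"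

definition calm_at :: "('a::real_normed_vector \<Rightarrow> ereal) \<Rightarrow> 'a \<Rightarrow> bool" where
  "calm_at \<phi> y0 \<longleftrightarrow> (\<exists>e>0. \<exists>\<kappa>>0. \<forall>y. norm (y - y0) < e \<longrightarrow>
      \<bar>\<phi> y - \<phi> y0\<bar> \<le> ereal (\<kappa> * norm (y - y0)))"

definition ess_strictly_convex :: "('a::real_inner \<Rightarrow> ereal) \<Rightarrow> bool" where
  "ess_strictly_convex \<phi> \<longleftrightarrow> (\<forall>C. convex C \<and> C \<subseteq> {x. csubdiff \<phi> x \<noteq> {}} \<longrightarrow>
      (\<forall>x\<in>C. \<forall>y\<in>C. \<forall>t. x \<noteq> y \<and> 0 < t \<and> t < 1 \<longrightarrow>
         \<phi> (t *\<^sub>R x + (1 - t) *\<^sub>R y) < ereal t * \<phi> x + ereal (1 - t) * \<phi> y))"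

definition prox :: "('a::real_normed_vector \<Rightarrow> ereal) \<Rightarrow> real \<Rightarrow> 'a \<Rightarrow> 'a" where
  "prox \<phi> \<kappa> x = (THE y. \<forall>w. \<phi> y + ereal ((norm (y - x))\<^sup>2 / (2 * \<kappa>))
                           \<le> \<phi> w + ereal ((norm (w - x))\<^sup>2 / (2 * \<kappa>)))"

definition Psi :: "'n::real_inner set \<Rightarrow> ('n \<Rightarrow> 's::real_inner) \<Rightarrow> ('s \<Rightarrow> ereal) \<Rightarrow> ('n \<Rightarrow> real)
     \<Rightarrow> 'n \<Rightarrow> 's \<Rightarrow> 'n \<Rightarrow> real \<Rightarrow> real \<Rightarrow> ereal" where
  "Psi S A g h x z u \<delta> \<gamma> =
     (if x \<in> S then ereal (inner z (A x) + h x + \<delta> / 2 * (norm (x - u))\<^sup>2 - \<gamma> / 2 * (norm z)\<^sup>2) - fconj g z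
      else \<infinity>)"

definition Gamma :: "'n::real_inner set \<Rightarrow> ('n \<Rightarrow> 's::real_inner) \<Rightarrow> ('n \<Rightarrow> 'p::real_inner)
     \<Rightarrow> ('s \<Rightarrow> ereal) \<Rightarrow> ('p \<Rightarrow> ereal) \<Rightarrow> ('n \<Rightarrow> real) \<Rightarrow> real \<Rightarrow> real \<Rightarrow> real
     \<Rightarrow> 'n \<times> 'p \<times> 's \<times> 'n \<Rightarrow> ereal" where
  "Gamma S A K g f h \<delta> \<gamma> m = (\<lambda>(x, y, z, u).
     if y \<in> edom (fconj f) \<and> ereal (inner (K x) y) - fconj f y > ereal (m / 2) \<and> z \<in> edom (fconj g)
     then Psi S A g h x z u \<delta> \<gamma> / (ereal (inner (K x) y) - fconj f y)
     else \<infinity>)"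

end

(*
  At the new iterate w = (x_{k+1}, y_{k+1}, z_{k+1}, u_{k+1}) the function Gamma = Psi / (<Kx, y> - f*(y))
  has an explicit Frechet subgradient.  In the numerator, h and the quadratic terms are smooth, and
  the z-part <z, Ax> - gamma/2 |z|^2 - g*(z) is stationary because the proximal step makes
  A x_{k+1} - gamma z_{k+1} a subgradient of g* at z_{k+1}; essential strict convexity of g turns this
  subgradient into a first-order upper estimate of g*, so that -g* has a genuine Frechet expansion.
  The constraint x in S contributes the normal vector left behind by the projection step, and the
  denominator is bounded above to first order because K x_k is a subgradient of f* at y_{k+1}.
  Substituting the update formulas, every component of this subgradient is a difference of
  consecutive iterates weighted by quantities that stay bounded, since the iterates live in compact
  sets and both numerator and denominator are bounded away from 0.
*)

theory Submission
  imports Defs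
begin

section \<open>Conjugates and proximal maps\<close>

lemma fenchel_young: "ereal (inner w y) - \<phi> w \<le> fconj \<phi> y"
  unfolding fconj_def by (rule SUP_upper) simp

lemma fconj_least: "(\<And>w. ereal (inner w y) - \<phi> w \<le> B) \<Longrightarrow> fconj \<phi> y \<le> B"
  unfolding fconj_def by (rule SUP_least) simp

lemma proper_fun_finite:
  assumes "proper_fun \<phi>" "\<phi> w < \<infinity>"
  shows "\<phi> w = ereal (real_of_ereal (\<phi> w))"
  using assms unfolding proper_fun_def by (cases "\<phi> w") auto

lemma fenchel_young_real:
  assumes "proper_fun \<phi>" "fconj \<phi> y = ereal c"
  shows "ereal (inner w y - c) \<le> \<phi> w"
proof -
  have le: "ereal (inner w y) - \<phi> w \<le> ereal c"
    using fenchel_young[of w y \<phi>] assms(2) by simp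
  show ?thesis
    using le assms(1) unfolding proper_fun_def by (cases "\<phi> w") auto
qed

lemma fconj_affine_minorant:
  assumes "proper_fun g"
  obtains w0 c0 where "\<And>y. ereal (inner w0 y - c0) \<le> fconj g y"
proof -
  obtain w0 where w0: "g w0 < \<infinity>"
    using assms unfolding proper_fun_def by blast
  have "ereal (inner w0 y - real_of_ereal (g w0)) \<le> fconj g y" for y
    using fenchel_young[of w0 y g] proper_fun_finite[OF assms w0] by (metis ereal_minus(1))
  then show ?thesis
    using that by blast
qed

lemma fconj_finite:
  assumes "proper_fun g" "fconj g y < \<infinity>"
  shows "fconj g y = ereal (real_of_ereal (fconj g y))"
proof -
  obtain w0 c0 where "ereal (inner w0 y - c0) \<le> fconj g y"
    using fconj_affine_minorant[OF assms(1)] by blast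
  then show ?thesis
    using assms(2) by (cases "fconj g y") auto
qed

lemma in_csubdiff_iff:
  "v \<in> csubdiff \<phi> x \<longleftrightarrow> \<bar>\<phi> x\<bar> \<noteq> \<infinity> \<and> (\<forall>w. \<phi> x + ereal (inner v (w - x)) \<le> \<phi> w)"
  unfolding csubdiff_def by auto

lemma in_csubdiff_realI:
  assumes "\<phi> x = ereal c" "\<And>w. ereal (c + inner v (w - x)) \<le> \<phi> w"
  shows "v \<in> csubdiff \<phi> x"
  using assms unfolding in_csubdiff_iff by simp

lemma in_csubdiff_realE:
  assumes "v \<in> csubdiff \<phi> x"
  obtains c where "\<phi> x = ereal c" "\<And>w. ereal (c + inner v (w - x)) \<le> \<phi> w"
proof -
  obtain c where c: "\<phi> x = ereal c"
    using assms unfolding in_csubdiff_iff by (cases "\<phi> x") auto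
  then show ?thesis
    using that assms unfolding in_csubdiff_iff by simp
qed

lemma fconj_convex_comb:
  assumes a1: "fconj g y1 = ereal a1" and a2: "fconj g y2 = ereal a2" and t: "0 \<le> t" "t \<le> 1"
  shows "fconj g ((1 - t) *\<^sub>R y1 + t *\<^sub>R y2) \<le> ereal ((1 - t) * a1 + t * a2)"
proof (rule fconj_least)
  fix w
  have 1: "ereal (inner w y1) - g w \<le> ereal a1" and 2: "ereal (inner w y2) - g w \<le> ereal a2"
    using fenchel_young[of w _ g] a1 a2 by metis+
  show "ereal (inner w ((1 - t) *\<^sub>R y1 + t *\<^sub>R y2)) - g w \<le> ereal ((1 - t) * a1 + t * a2)"
  proof (cases "g w")
    case (real G)
    have "inner w ((1 - t) *\<^sub>R y1 + t *\<^sub>R y2) - G = (1 - t) * (inner w y1 - G) + t * (inner w y2 - G)"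
      by (simp add: inner_add_right algebra_simps)
    also have "\<dots> \<le> (1 - t) * a1 + t * a2"
      using 1 2 t real by (intro add_mono mult_left_mono) auto
    finally show ?thesis
      using real by simp
  qed (use 1 in auto)
qed

lemma fconj_limit_le:
  assumes lim: "ys \<longlonglongrightarrow> y" and le: "\<And>n. fconj g (ys n) \<le> ereal (a n)" and a: "a \<longlonglongrightarrow> a0"
  shows "fconj g y \<le> ereal a0"
proof (rule fconj_least)
  fix w
  have fy: "ereal (inner w (ys n)) - g w \<le> ereal (a n)" for n
    using fenchel_young[of w "ys n" g] le[of n] by (rule order_trans)
  show "ereal (inner w y) - g w \<le> ereal a0"
  proof (cases "g w")
    case (real G)
    have "inner w y - G \<le> a0"
    proof (rule LIMSEQ_le[OF _ a])
      show "(\<lambda>n. inner w (ys n) - G) \<longlonglongrightarrow> inner w y - G"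
        using lim by (intro tendsto_intros)
      show "\<exists>N. \<forall>n\<ge>N. inner w (ys n) - G \<le> a n"
        using fy real by simp
    qed
    then show ?thesis
      using real by simp
  qed (use fy[of 0] in auto)
qed

lemma lsc_fun_limit_le:
  fixes \<phi> :: "'a::metric_space \<Rightarrow> ereal"
  assumes lsc: "lsc_fun \<phi>" and lim: "ps \<longlonglongrightarrow> p" and le: "\<And>n. \<phi> (ps n) \<le> ereal (a n)"
    and a: "a \<longlonglongrightarrow> a0"
  shows "\<phi> p \<le> ereal a0"
proof (rule ccontr)
  assume "\<not> ?thesis"
  then have "ereal a0 < \<phi> p"
    by simp
  then obtain a1 where a1: "ereal a0 < ereal a1" "ereal a1 < \<phi> p"
    using ereal_dense2 by blast
  then have "ereal a1 < Liminf (at p) \<phi>"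
    using lsc unfolding lsc_fun_def by (meson order_less_le_trans)
  then obtain e where e: "e > 0" "ereal a1 < (INF y\<in>ball p e - {p}. \<phi> y)"
    unfolding Liminf_at less_SUP_iff by auto
  have "eventually (\<lambda>n. dist (ps n) p < e) sequentially"
    using lim e(1) by (simp add: tendsto_iff)
  moreover have "eventually (\<lambda>n. a n < a1) sequentially"
    using a a1(1) by (simp add: order_tendstoD(2))
  ultimately have "eventually (\<lambda>n. dist (ps n) p < e \<and> a n < a1) sequentially"
    by (rule eventually_conj)
  then obtain n where n: "dist (ps n) p < e" "a n < a1"
    unfolding eventually_sequentially by blast
  have "\<phi> (ps n) < ereal a1"
    using le[of n] n(2) by (simp add: le_less_trans)
  moreover have "ereal a1 \<le> \<phi> (ps n)"
  proof (cases "ps n = p")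
    case False
    then have "ps n \<in> ball p e - {p}"
      using n(1) by (simp add: dist_commute)
    then have "(INF y\<in>ball p e - {p}. \<phi> y) \<le> \<phi> (ps n)"
      by (rule INF_lower)
    then show ?thesis
      using e(2) by simp
  qed (use a1 in simp)
  ultimately show False
    by simp
qed

definition epi :: "('a \<Rightarrow> ereal) \<Rightarrow> ('a \<times> real) set" where
  "epi \<phi> = {(w, t). \<phi> w \<le> ereal t}"

lemma closed_epi:
  fixes \<phi> :: "'a::real_normed_vector \<Rightarrow> ereal"
  assumes "lsc_fun \<phi>"
  shows "closed (epi \<phi>)"
proof (rule closed_sequential_limits[THEN iffD2], intro allI impI, elim conjE)
  fix s :: "nat \<Rightarrow> 'a \<times> real" and l
  assume s: "\<forall>n. s n \<in> epi \<phi>" "s \<longlonglongrightarrow> l"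
  have "\<phi> (fst l) \<le> ereal (snd l)"
  proof (rule lsc_fun_limit_le[OF assms])
    show "(\<lambda>n. fst (s n)) \<longlonglongrightarrow> fst l" "(\<lambda>n. snd (s n)) \<longlonglongrightarrow> snd l"
      using s(2) by (auto intro: tendsto_fst tendsto_snd)
    show "\<phi> (fst (s n)) \<le> ereal (snd (s n))" for n
      using s(1) by (auto simp: epi_def split: prod.splits)
  qed
  then show "l \<in> epi \<phi>"
    by (auto simp: epi_def split: prod.splits)
qed

lemma convex_epi:
  fixes \<phi> :: "'a::real_vector \<Rightarrow> ereal"
  assumes "convex_fun \<phi>"
  shows "convex (epi \<phi>)"
proof (rule convexI)
  fix p q :: "'a \<times> real" and u v :: real
  assume p: "p \<in> epi \<phi>" and q: "q \<in> epi \<phi>" and uv: "0 \<le> u" "0 \<le> v" "u + v = 1"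
  obtain w1 t1 w2 t2 where pq: "p = (w1, t1)" "q = (w2, t2)"
    by fastforce
  have v: "v = 1 - u"
    using uv by simp
  have "\<phi> (u *\<^sub>R w1 + v *\<^sub>R w2) \<le> ereal u * \<phi> w1 + ereal v * \<phi> w2"
    using assms uv unfolding convex_fun_def v by auto
  also have "\<dots> \<le> ereal u * ereal t1 + ereal v * ereal t2"
    using p q pq uv by (intro add_mono ereal_mult_left_mono) (auto simp: epi_def)
  finally show "u *\<^sub>R p + v *\<^sub>R q \<in> epi \<phi>"
    using pq by (simp add: epi_def)
qed

lemma fconj_le_of_affine_minorant:
  assumes "\<And>w. ereal (inner w y - \<beta>) \<le> g w"
  shows "fconj g y \<le> ereal \<beta>"
proof (rule fconj_least)
  fix w
  show "ereal (inner w y) - g w \<le> ereal \<beta>"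
    using assms[of w] by (cases "g w") auto
qed

text \<open>Separating the point \<open>(v, \<alpha>)\<close> from the epigraph gives a hyperplane that may be vertical;
  tilting it by the given affine minorant makes it the graph of an affine minorant.\<close>

lemma affine_minorant_improve:
  fixes g :: "'a::euclidean_space \<Rightarrow> ereal"
  assumes gp: "proper_fun g" and gc: "convex_fun g" and gl: "lsc_fun g"
    and minor: "\<And>w. ereal (inner w z - c) \<le> g w" and above: "ereal (inner v z - c) < g v"
  obtains y \<beta> where "\<And>w. ereal (inner w y - \<beta>) \<le> g w" "inner v z - c < inner v y - \<beta>"
proof -
  define \<kappa> where "\<kappa> = inner v z - c"
  obtain \<alpha> where \<alpha>: "\<kappa> < \<alpha>" "ereal \<alpha> < g v"
    using ereal_dense2[OF above] unfolding \<kappa>_def by auto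
  have "(v, \<alpha>) \<notin> epi g"
    using \<alpha>(2) by (simp add: epi_def)
  then obtain a b where sep: "inner a (v, \<alpha>) < b" "\<forall>p\<in>epi g. b < inner a p"
    using separating_hyperplane_closed_point[OF convex_epi[OF gc] closed_epi[OF gl]] by blast
  obtain a1 a2 where a: "a = (a1, a2)"
    by fastforce
  have sep_v: "inner a1 v + a2 * \<alpha> < b"
    using sep(1) a by simp
  have sep_epi: "b < inner a1 w + a2 * t" if "g w \<le> ereal t" for w t
    using sep(2) that a by (auto simp: epi_def)
  have a2: "a2 \<ge> 0"
  proof (rule ccontr)
    assume "\<not> a2 \<ge> 0"
    then have neg: "a2 < 0"
      by simp
    obtain w0 where w0: "g w0 < \<infinity>"
      using gp unfolding proper_fun_def by blast
    define T where "T = max (real_of_ereal (g w0)) ((inner a1 w0 - b) / (- a2))"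
    have "g w0 \<le> ereal T"
      using proper_fun_finite[OF gp w0] unfolding T_def by (metis ereal_less_eq(3) max.cobounded1)
    then have "b < inner a1 w0 + a2 * T"
      by (rule sep_epi)
    moreover have "a2 * T \<le> a2 * ((inner a1 w0 - b) / (- a2))"
      using neg unfolding T_def by (intro mult_left_mono_neg) auto
    ultimately show False
      using neg by simp
  qed
  define y where "y = (1 / (a2 + 1)) *\<^sub>R (z - a1)"
  define \<beta> where "\<beta> = (c - b) / (a2 + 1)"
  have lin: "(a2 + 1) * (inner w y - \<beta>) = inner w z - c - inner a1 w + b" for w
  proof -
    have "(a2 + 1) * inner w y = inner w z - inner a1 w"
      unfolding y_def using a2 by (simp add: inner_diff_right inner_commute)
    moreover have "(a2 + 1) * \<beta> = c - b"
      unfolding \<beta>_def using a2 by simp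
    ultimately show ?thesis
      by (simp add: right_diff_distrib)
  qed
  show ?thesis
  proof
    fix w
    show "ereal (inner w y - \<beta>) \<le> g w"
    proof (cases "g w")
      case (real t)
      have "b < inner a1 w + a2 * t" "inner w z - c \<le> t"
        using sep_epi[of w t] minor[of w] real by auto
      then have "(a2 + 1) * (inner w y - \<beta>) < (a2 + 1) * t"
        unfolding lin by (simp add: algebra_simps)
      then show ?thesis
        using real a2 by (simp add: mult_less_cancel_left_pos)
    qed (use minor[of w] in auto)
  next
    have "(a2 + 1) * \<kappa> < (a2 + 1) * (inner v y - \<beta>)"
      using lin[of v] sep_v a2 mult_left_mono[OF less_imp_le[OF \<alpha>(1)] a2]
      unfolding \<kappa>_def by (simp add: algebra_simps inner_commute)
    then show "inner v z - c < inner v y - \<beta>"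
      using a2 unfolding \<kappa>_def by (simp add: mult_less_cancel_left_pos)
  qed
qed

text \<open>This is where lower semicontinuity of \<open>g\<close> enters: without it \<open>g\<close> could lie strictly
  above its biconjugate at \<open>v\<close>.\<close>

lemma csubdiff_fconj_fenchel_young:
  fixes g :: "'a::euclidean_space \<Rightarrow> ereal"
  assumes gp: "proper_fun g" and gc: "convex_fun g" and gl: "lsc_fun g"
    and gz: "fconj g z = ereal c" and v: "v \<in> csubdiff (fconj g) z"
  shows "g v = ereal (inner v z - c)"
proof (rule antisym[OF _ fenchel_young_real[OF gp gz]], rule ccontr)
  assume "\<not> g v \<le> ereal (inner v z - c)"
  then have "ereal (inner v z - c) < g v"
    by simp
  then obtain y \<beta> where minor: "\<And>w. ereal (inner w y - \<beta>) \<le> g w"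
    and gt: "inner v z - c < inner v y - \<beta>"
    using affine_minorant_improve[OF gp gc gl fenchel_young_real[OF gp gz]] by auto
  have "fconj g y \<le> ereal \<beta>"
    using minor by (rule fconj_le_of_affine_minorant)
  moreover have "ereal (c + inner v (y - z)) \<le> fconj g y"
    using v gz unfolding in_csubdiff_iff by auto
  ultimately have "c + inner v (y - z) \<le> \<beta>"
    using order_trans ereal_less_eq(3) by blast
  then show False
    using gt by (simp add: inner_diff_right)
qed

lemma fconj_attained_csubdiff:
  assumes gp: "proper_fun g" and gz: "fconj g z = ereal c" and p: "g p \<le> ereal (inner p z - c)"
  shows "g p = ereal (inner p z - c)" "z \<in> csubdiff g p"
proof -
  show gp_eq: "g p = ereal (inner p z - c)"
    using p fenchel_young_real[OF gp gz, of p] by (rule antisym)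
  show "z \<in> csubdiff g p"
  proof (rule in_csubdiff_realI)
    show "g p = ereal (inner p z - c)"
      by (rule gp_eq)
    show "ereal (inner p z - c + inner z (w - p)) \<le> g w" for w
      using fenchel_young_real[OF gp gz, of w] by (simp add: inner_diff_right inner_commute)
  qed
qed

text \<open>The points where the Fenchel--Young inequality for \<open>z\<close> is attained form a segment
  inside the domain of \<open>\<partial>g\<close>, on which \<open>g\<close> is affine; so essential strict convexity leaves
  at most one of them.\<close>

lemma fconj_attained_unique:
  fixes g :: "'a::real_inner \<Rightarrow> ereal"
  assumes gp: "proper_fun g" and gc: "convex_fun g" and es: "ess_strictly_convex g"
    and gz: "fconj g z = ereal c"
    and v: "g v \<le> ereal (inner v z - c)" and p: "g p \<le> ereal (inner p z - c)"
  shows "p = v"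
proof (rule ccontr)
  assume ne: "p \<noteq> v"
  have gv: "g v = ereal (inner v z - c)" and gpp: "g p = ereal (inner p z - c)"
    using fconj_attained_csubdiff(1)[OF gp gz] v p by auto
  have seg: "g (t *\<^sub>R v + (1 - t) *\<^sub>R p) \<le> ereal (inner (t *\<^sub>R v + (1 - t) *\<^sub>R p) z - c)"
    if "0 \<le> t" "t \<le> 1" for t
  proof -
    have "g (t *\<^sub>R v + (1 - t) *\<^sub>R p) \<le> ereal t * g v + ereal (1 - t) * g p"
      using gc that unfolding convex_fun_def by blast
    also have "\<dots> = ereal (inner (t *\<^sub>R v + (1 - t) *\<^sub>R p) z - c)"
      unfolding gv gpp by (simp add: inner_add_left algebra_simps)
    finally show ?thesis .
  qed
  have "closed_segment p v \<subseteq> {x. csubdiff g x \<noteq> {}}"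
  proof
    fix x
    assume "x \<in> closed_segment p v"
    then obtain t where t: "0 \<le> t" "t \<le> 1" "x = t *\<^sub>R v + (1 - t) *\<^sub>R p"
      unfolding closed_segment_def by (auto simp: algebra_simps)
    show "x \<in> {x. csubdiff g x \<noteq> {}}"
      using fconj_attained_csubdiff(2)[OF gp gz seg[OF t(1,2)]] t(3) by auto
  qed
  then have "\<forall>x\<in>closed_segment p v. \<forall>y\<in>closed_segment p v. \<forall>t. x \<noteq> y \<and> 0 < t \<and> t < 1 \<longrightarrow>
      g (t *\<^sub>R x + (1 - t) *\<^sub>R y) < ereal t * g x + ereal (1 - t) * g y"
    using es convex_closed_segment[of p v] unfolding ess_strictly_convex_def by blast
  then have "g ((1/2) *\<^sub>R v + (1 - 1/2) *\<^sub>R p) < ereal (1/2) * g v + ereal (1 - 1/2) * g p"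
    using ne by (metis ends_in_segment field_sum_of_halves half_gt_zero_iff zero_less_one less_add_same_cancel1)
  also have "\<dots> = ereal (inner ((1/2) *\<^sub>R v + (1 - 1/2) *\<^sub>R p) z - c)"
    unfolding gv gpp by (simp add: inner_add_left field_simps)
  also have "\<dots> \<le> g ((1/2) *\<^sub>R v + (1 - 1/2) *\<^sub>R p)"
    by (rule fenchel_young_real[OF gp gz])
  finally show False
    by simp
qed

lemma fconj_excess_point:
  fixes g :: "'a::real_inner \<Rightarrow> ereal"
  assumes gp: "proper_fun g" and gc: "convex_fun g" and gz: "fconj g z = ereal c"
    and gv: "g v = ereal (inner v z - c)" and e: "e > 0"
    and exc: "ereal (c + inner v (z' - z) + e * norm (z' - z)) < fconj g z'"
  obtains p where "norm (p - v) = e / 2" "g p \<le> ereal (inner p z - c + e / 2 * norm (z' - z))"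
proof -
  define t where "t = norm (z' - z)"
  have t: "t > 0"
    using exc gz unfolding t_def by (cases "z' = z") auto
  have "c + inner v (z' - z) + e / 2 * t \<le> c + inner v (z' - z) + e * t"
    using e t by simp
  then have "ereal (c + inner v (z' - z) + e / 2 * t) < fconj g z'"
    using exc unfolding t_def[symmetric] by (meson ereal_less_eq(3) order_le_less_trans)
  then obtain w where w: "ereal (c + inner v (z' - z) + e / 2 * t) < ereal (inner w z') - g w"
    unfolding fconj_def less_SUP_iff by blast
  then obtain G where G: "g w = ereal G"
    using gp unfolding proper_fun_def by (cases "g w") auto
  have wG: "c + inner v (z' - z) + e / 2 * t < inner w z' - G"
    using w G by simp
  have Gz: "inner w z - c \<le> G"
    using fenchel_young_real[OF gp gz, of w] G by simp
  have key: "e / 2 * t < inner (w - v) (z' - z)"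
    using wG Gz by (simp add: inner_diff_left inner_diff_right algebra_simps)
  also have "\<dots> \<le> norm (w - v) * t"
    unfolding t_def by (rule norm_cauchy_schwarz)
  finally have wv: "e / 2 < norm (w - v)"
    using t by simp
  define \<mu> where "\<mu> = e / 2 / norm (w - v)"
  have nwv: "0 < norm (w - v)"
    using wv e by linarith
  have \<mu>: "0 < \<mu>" "\<mu> < 1" "\<mu> * norm (w - v) = e / 2"
    unfolding \<mu>_def using e wv nwv by (simp_all add: pos_divide_less_eq)
  define p where "p = \<mu> *\<^sub>R w + (1 - \<mu>) *\<^sub>R v"
  show ?thesis
  proof
    have "p - v = \<mu> *\<^sub>R (w - v)"
      unfolding p_def by (simp add: algebra_simps)
    then show "norm (p - v) = e / 2"
      using \<mu> by simp
  next
    have "g p \<le> ereal \<mu> * g w + ereal (1 - \<mu>) * g v"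
      using gc \<mu> unfolding convex_fun_def p_def by auto
    also have "\<dots> = ereal (\<mu> * G + (1 - \<mu>) * (inner v z - c))"
      using G gv by simp
    also have "\<mu> * G + (1 - \<mu>) * (inner v z - c) \<le> inner p z - c + e / 2 * t"
    proof -
      have "0 < e / 2 * t"
        using e t by simp
      then have "\<mu> * G \<le> \<mu> * (inner w z' - c - inner v (z' - z))"
        using wG \<mu>(1) by (intro mult_left_mono) auto
      moreover have "\<mu> * (inner w z' - c - inner v (z' - z)) + (1 - \<mu>) * (inner v z - c)
          = inner p z - c + \<mu> * inner (w - v) (z' - z)"
        unfolding p_def by (simp add: inner_diff_left inner_diff_right inner_add_left algebra_simps)
      moreover have "\<mu> * inner (w - v) (z' - z) \<le> e / 2 * t"
        using mult_left_mono[OF norm_cauchy_schwarz[of "w - v" "z' - z"], of \<mu>] \<mu>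
        unfolding t_def by (simp add: mult.assoc[symmetric])
      ultimately show ?thesis
        by linarith
    qed
    finally show "g p \<le> ereal (inner p z - c + e / 2 * norm (z' - z))"
      unfolding t_def by simp
  qed
qed

text \<open>Essential strict convexity of \<open>g\<close> makes \<open>g\<^sup>*\<close> differentiable relative to its domain: a
  subgradient \<open>v\<close> of \<open>g\<^sup>*\<close> also gives a first-order upper estimate.  Otherwise the points
  of fconj_excess_point accumulate at a second point, at distance \<open>e/2\<close> from \<open>v\<close>,
  where the Fenchel--Young inequality for \<open>z\<close> is attained.\<close>

lemma fconj_upper_estimate:
  fixes g :: "'a::euclidean_space \<Rightarrow> ereal"
  assumes gp: "proper_fun g" and gc: "convex_fun g" and gl: "lsc_fun g"
    and es: "ess_strictly_convex g" and v: "v \<in> csubdiff (fconj g) z" and e: "e > 0"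
  shows "\<exists>d>0. \<forall>z'. norm (z' - z) < d \<longrightarrow>
           fconj g z' \<le> fconj g z + ereal (inner v (z' - z) + e * norm (z' - z))"
proof (rule ccontr)
  obtain c where gz: "fconj g z = ereal c"
    using v by (rule in_csubdiff_realE)
  have gv: "g v = ereal (inner v z - c)"
    using csubdiff_fconj_fenchel_young[OF gp gc gl gz v] .
  assume "\<not> ?thesis"
  then have "\<forall>n. \<exists>z'. norm (z' - z) < 1 / Suc n \<and>
      ereal (c + inner v (z' - z) + e * norm (z' - z)) < fconj g z'"
    using gz by (auto simp: not_le add.assoc)
  then obtain zs where zs: "\<And>n. norm (zs n - z) < 1 / Suc n"
    "\<And>n. ereal (c + inner v (zs n - z) + e * norm (zs n - z)) < fconj g (zs n)"
    by metis
  have "\<forall>n. \<exists>p. p \<in> sphere v (e / 2) \<and> g p \<le> ereal (inner p z - c + e / 2 * norm (zs n - z))"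
    using fconj_excess_point[OF gp gc gz gv e zs(2)] by (metis dist_norm mem_sphere norm_minus_commute)
  then obtain ps where ps: "\<And>n. ps n \<in> sphere v (e / 2)"
    "\<And>n. g (ps n) \<le> ereal (inner (ps n) z - c + e / 2 * norm (zs n - z))"
    by metis
  obtain l r where l: "l \<in> sphere v (e / 2)" and r: "strict_mono r" and lim: "(ps \<circ> r) \<longlonglongrightarrow> l"
    using compact_imp_seq_compact[OF compact_sphere] ps(1) unfolding seq_compact_def by metis
  have "(\<lambda>n. norm (zs n - z)) \<longlonglongrightarrow> 0"
  proof (rule tendsto_sandwich[of "\<lambda>_. 0" _ _ "\<lambda>n. 1 / Suc n"])
    show "(\<lambda>n. 1 / real (Suc n)) \<longlonglongrightarrow> 0"
      by (rule LIMSEQ_Suc[OF lim_1_over_n])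
  qed (use zs(1) in \<open>auto intro: always_eventually less_imp_le\<close>)
  then have "(\<lambda>n. norm (zs (r n) - z)) \<longlonglongrightarrow> 0"
    using LIMSEQ_subseq_LIMSEQ[OF _ r] by (auto simp: o_def)
  moreover have "(\<lambda>n. ps (r n)) \<longlonglongrightarrow> l"
    using lim by (simp add: o_def)
  ultimately have "(\<lambda>n. inner (ps (r n)) z - c + e / 2 * norm (zs (r n) - z))
      \<longlonglongrightarrow> inner l z - c + e / 2 * 0"
    by (intro tendsto_intros)
  then have "g l \<le> ereal (inner l z - c + e / 2 * 0)"
    using ps(2) by (intro lsc_fun_limit_le[OF gl lim]) auto
  then have "l = v"
    using fconj_attained_unique[OF gp gc es gz] gv by simp
  then show False
    using l e by simp
qed

lemma sq_le_linear_imp_le: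
  fixes s a b :: real
  assumes "0 \<le> s" "0 \<le> b" "s\<^sup>2 \<le> a + b * s"
  shows "s \<le> \<bar>a\<bar> + b + 1"
proof (cases "s \<le> 1")
  case False
  then have "s * s \<le> (\<bar>a\<bar> + b) * s"
    using assms by (simp add: power2_eq_square algebra_simps) (smt (verit) mult_le_cancel_right1)
  then show ?thesis
    using False by (simp add: mult_le_cancel_right)
qed (use assms in linarith)

lemma le_of_le_plus_small:
  fixes a b C :: real
  assumes "0 \<le> C" "\<And>t. 0 < t \<Longrightarrow> t \<le> 1 \<Longrightarrow> a \<le> b + t * C"
  shows "a \<le> b"
proof (rule field_le_epsilon)
  fix e :: real
  assume e: "0 < e"
  define t where "t = min 1 (e / (C + 1))"
  have t: "0 < t" "t \<le> 1"
    unfolding t_def using e assms(1) by auto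
  have "t * C \<le> e / (C + 1) * C"
    unfolding t_def using assms(1) by (intro mult_right_mono) auto
  also have "\<dots> \<le> e"
    using e assms(1) by (simp add: field_simps)
  finally show "a \<le> b + e"
    using assms(2)[OF t] by linarith
qed

lemma norm_sq_add_scaleR:
  fixes a b :: "'a::real_inner"
  shows "(norm (a + t *\<^sub>R b))\<^sup>2 = (norm a)\<^sup>2 + 2 * t * inner a b + t\<^sup>2 * (norm b)\<^sup>2"
  unfolding power2_norm_eq_inner
  by (simp add: inner_add_left inner_add_right inner_commute algebra_simps power2_eq_square)

text \<open>The objective \<open>g\<^sup>* + \<parallel>\<cdot> - p\<parallel>\<^sup>2/(2\<kappa>)\<close> of the proximal map of \<open>g\<^sup>*\<close> is coercive, since \<open>g\<^sup>*\<close>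
  has an affine minorant.\<close>

lemma fconj_prox_sublevel_bounded:
  assumes gp: "proper_fun g" and k: "\<kappa> > 0"
  obtains R where "\<And>y. fconj g y + ereal ((norm (y - p))\<^sup>2 / (2 * \<kappa>)) \<le> ereal t \<Longrightarrow> norm (y - p) \<le> R"
proof -
  obtain w0 c0 where low: "\<And>y. ereal (inner w0 y - c0) \<le> fconj g y"
    using fconj_affine_minorant[OF gp] by blast
  define R where "R = \<bar>2 * \<kappa> * (t + c0 - inner w0 p)\<bar> + 2 * \<kappa> * norm w0 + 1"
  have "norm (y - p) \<le> R" if le: "fconj g y + ereal ((norm (y - p))\<^sup>2 / (2 * \<kappa>)) \<le> ereal t" for y
  proof -
    define s where "s = norm (y - p)"
    have "inner w0 y - c0 + s\<^sup>2 / (2 * \<kappa>) \<le> t"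
      using order_trans[OF add_right_mono[OF low] le] unfolding s_def by simp
    moreover have "- (norm w0 * s) \<le> inner w0 (y - p)"
      using Cauchy_Schwarz_ineq2[of w0 "y - p"] unfolding s_def by (simp add: abs_le_iff)
    ultimately have "s\<^sup>2 / (2 * \<kappa>) \<le> t + c0 - inner w0 p + norm w0 * s"
      by (simp add: inner_diff_right)
    then have "s\<^sup>2 \<le> (t + c0 - inner w0 p + norm w0 * s) * (2 * \<kappa>)"
      using k by (subst (asm) pos_divide_le_eq) auto
    then have "s\<^sup>2 \<le> 2 * \<kappa> * (t + c0 - inner w0 p) + 2 * \<kappa> * norm w0 * s"
      by (simp add: algebra_simps)
    then show ?thesis
      unfolding R_def s_def[symmetric] using k by (intro sq_le_linear_imp_le) (auto simp: s_def)
  qed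
  then show ?thesis
    using that by blast
qed

lemma fconj_prox_objective_bounded_below:
  assumes gp: "proper_fun g" and k: "\<kappa> > 0"
  obtains B where "\<And>y. ereal B \<le> fconj g y + ereal ((norm (y - p))\<^sup>2 / (2 * \<kappa>))"
proof -
  obtain w0 c0 where low: "\<And>y. ereal (inner w0 y - c0) \<le> fconj g y"
    using fconj_affine_minorant[OF gp] by blast
  define B where "B = inner w0 p - \<kappa> * (norm w0)\<^sup>2 / 2 - c0"
  have "B \<le> inner w0 y - c0 + (norm (y - p))\<^sup>2 / (2 * \<kappa>)" for y
  proof -
    have "0 \<le> (norm ((y - p) + \<kappa> *\<^sub>R w0))\<^sup>2 / (2 * \<kappa>)"
      using k by simp
    also have "\<dots> = (norm (y - p))\<^sup>2 / (2 * \<kappa>) + inner w0 (y - p) + \<kappa> * (norm w0)\<^sup>2 / 2"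
      unfolding norm_sq_add_scaleR using k by (simp add: field_simps power2_eq_square inner_commute)
    finally show ?thesis
      unfolding B_def by (simp add: inner_diff_right)
  qed
  then have "ereal B \<le> fconj g y + ereal ((norm (y - p))\<^sup>2 / (2 * \<kappa>))" for y
    using add_right_mono[OF low[of y], of "ereal ((norm (y - p))\<^sup>2 / (2 * \<kappa>))"]
    by (metis ereal_less_eq(3) order_trans plus_ereal.simps(1))
  then show ?thesis
    using that by blast
qed

lemma fconj_prox_objective_has_min:
  fixes g :: "'a::euclidean_space \<Rightarrow> ereal"
  assumes gp: "proper_fun g" and k: "\<kappa> > 0" and fin: "fconj g y0 < \<infinity>"
  obtains y where "\<And>w. fconj g y + ereal ((norm (y - p))\<^sup>2 / (2 * \<kappa>))
                      \<le> fconj g w + ereal ((norm (w - p))\<^sup>2 / (2 * \<kappa>))"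
proof -
  define q where "q y = (norm (y - p))\<^sup>2 / (2 * \<kappa>)" for y
  define \<phi> where "\<phi> y = fconj g y + ereal (q y)" for y
  define I where "I = (INF y. \<phi> y)"
  obtain B where B: "\<And>y. ereal B \<le> \<phi> y"
    using fconj_prox_objective_bounded_below[OF gp k] unfolding \<phi>_def q_def by blast
  have "I \<le> \<phi> y0"
    unfolding I_def by (rule INF_lower) simp
  moreover have "\<phi> y0 < \<infinity>"
    using fin unfolding \<phi>_def by simp
  moreover have "ereal B \<le> I"
    unfolding I_def by (rule INF_greatest) (use B in auto)
  ultimately obtain Ir where Ir: "I = ereal Ir"
    by (cases I) auto
  have "\<exists>y. \<phi> y < ereal (Ir + 1 / Suc n)" for n
  proof -
    have "I < ereal (Ir + 1 / Suc n)"
      using Ir by simp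
    then show ?thesis
      unfolding I_def INF_less_iff by blast
  qed
  then obtain ys where ys: "\<And>n. \<phi> (ys n) < ereal (Ir + 1 / Suc n)"
    by metis
  obtain R where R: "\<And>y. \<phi> y \<le> ereal (Ir + 1) \<Longrightarrow> norm (y - p) \<le> R"
    using fconj_prox_sublevel_bounded[OF gp k] unfolding \<phi>_def q_def by blast
  have "\<phi> (ys n) \<le> ereal (Ir + 1)" for n
    using ys[of n] by (rule order.strict_implies_order[THEN order_trans]) simp
  then have "ys n \<in> cball p R" for n
    using R[of "ys n"] by (simp add: dist_norm norm_minus_commute)
  then obtain y r where r: "strict_mono r" and lim: "(ys \<circ> r) \<longlonglongrightarrow> y"
    using compact_imp_seq_compact[OF compact_cball] unfolding seq_compact_def by metis
  have "fconj g y \<le> ereal (Ir + 0 - q y)"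
  proof (rule fconj_limit_le[OF lim])
    show "fconj g ((ys \<circ> r) n) \<le> ereal (Ir + 1 / Suc (r n) - q (ys (r n)))" for n
      using ys[of "r n"] unfolding \<phi>_def by (cases "fconj g (ys (r n))") auto
    have "(\<lambda>n. 1 / real (Suc (r n))) \<longlonglongrightarrow> 0"
      using LIMSEQ_subseq_LIMSEQ[OF LIMSEQ_Suc[OF lim_1_over_n] r] by (simp add: o_def)
    moreover have "(\<lambda>n. q (ys (r n))) \<longlonglongrightarrow> q y"
      unfolding q_def using lim k by (intro tendsto_intros) (auto simp: o_def)
    ultimately show "(\<lambda>n. Ir + 1 / Suc (r n) - q (ys (r n))) \<longlonglongrightarrow> Ir + 0 - q y"
      by (intro tendsto_intros)
  qed
  then have "\<phi> y \<le> I"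
    unfolding \<phi>_def Ir by (cases "fconj g y") auto
  then show ?thesis
    using that unfolding I_def \<phi>_def q_def by (meson INF_lower UNIV_I order_trans)
qed

text \<open>Strong convexity of the quadratic term.\<close>

lemma fconj_prox_objective_min_unique:
  assumes gp: "proper_fun g" and k: "\<kappa> > 0" and fin: "fconj g y0 < \<infinity>"
    and y1: "\<And>w. fconj g y1 + ereal ((norm (y1 - p))\<^sup>2 / (2 * \<kappa>))
                  \<le> fconj g w + ereal ((norm (w - p))\<^sup>2 / (2 * \<kappa>))"
    and y2: "\<And>w. fconj g y2 + ereal ((norm (y2 - p))\<^sup>2 / (2 * \<kappa>))
                  \<le> fconj g w + ereal ((norm (w - p))\<^sup>2 / (2 * \<kappa>))"
  shows "y1 = y2"
proof -
  define q where "q y = (norm (y - p))\<^sup>2 / (2 * \<kappa>)" for y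
  have "fconj g y1 + ereal (q y1) < \<infinity>" "fconj g y2 + ereal (q y2) < \<infinity>"
    using y1[of y0] y2[of y0] fin unfolding q_def by (auto simp: le_less_trans)
  then obtain a1 a2 where a1: "fconj g y1 = ereal a1" and a2: "fconj g y2 = ereal a2"
    using fconj_finite[OF gp] by (metis PInfty_neq_ereal(1) ereal_infty_less(1) ereal_plus_eq_PInfty)
  have eq: "a1 + q y1 = a2 + q y2"
    using y1[of y2] y2[of y1] a1 a2 unfolding q_def by simp
  define mid where "mid = (1 - 1/2) *\<^sub>R y1 + (1/2) *\<^sub>R y2"
  have mid_p: "mid - p = (y1 - p) + (1/2) *\<^sub>R (y2 - y1)" and y2_p: "y2 - p = (y1 - p) + 1 *\<^sub>R (y2 - y1)"
    unfolding mid_def by (simp_all only: scaleR_diff_left scaleR_diff_right scaleR_one) (simp_all add: algebra_simps)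
  have e1: "(norm (mid - p))\<^sup>2 = (norm (y1 - p))\<^sup>2 + inner (y1 - p) (y2 - y1) + (norm (y2 - y1))\<^sup>2 / 4"
    unfolding mid_p norm_sq_add_scaleR by (simp add: power_divide)
  have e2: "(norm (y2 - p))\<^sup>2 = (norm (y1 - p))\<^sup>2 + 2 * inner (y1 - p) (y2 - y1) + (norm (y2 - y1))\<^sup>2"
    unfolding y2_p norm_sq_add_scaleR by simp
  have "q mid = q y1 / 2 + q y2 / 2 - (norm (y2 - y1))\<^sup>2 / (8 * \<kappa>)"
    unfolding q_def by (simp only: e1 e2) (use k in \<open>simp add: field_simps\<close>)
  moreover have "a1 + q y1 \<le> (1 - 1/2) * a1 + (1/2) * a2 + q mid"
  proof -
    have "fconj g y1 + ereal (q y1) \<le> fconj g mid + ereal (q mid)"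
      using y1 unfolding q_def by simp
    also have "\<dots> \<le> ereal ((1 - 1/2) * a1 + (1/2) * a2) + ereal (q mid)"
      unfolding mid_def by (intro add_right_mono fconj_convex_comb[OF a1 a2]) auto
    finally show ?thesis
      using a1 by simp
  qed
  ultimately have "(norm (y2 - y1))\<^sup>2 / (8 * \<kappa>) \<le> 0"
    using eq by simp
  then have "(norm (y2 - y1))\<^sup>2 \<le> 0"
    using k by (simp add: divide_le_0_iff)
  then show ?thesis
    by simp
qed

text \<open>First-order optimality: compare the minimum with the objective along the segment to \<open>w\<close>.\<close>

lemma fconj_prox_objective_min_csubdiff:
  assumes gp: "proper_fun g" and k: "\<kappa> > 0" and fz: "fconj g z = ereal c"
    and min: "\<And>w. fconj g z + ereal ((norm (z - p))\<^sup>2 / (2 * \<kappa>))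
                  \<le> fconj g w + ereal ((norm (w - p))\<^sup>2 / (2 * \<kappa>))"
  shows "(1 / \<kappa>) *\<^sub>R (p - z) \<in> csubdiff (fconj g) z"
proof (rule in_csubdiff_realI[where \<phi> = "fconj g", OF fz])
  fix w
  define q where "q y = (norm (y - p))\<^sup>2 / (2 * \<kappa>)" for y
  show "ereal (c + inner ((1 / \<kappa>) *\<^sub>R (p - z)) (w - z)) \<le> fconj g w"
  proof (cases "fconj g w")
    case (real a)
    define N where "N = (norm (w - z))\<^sup>2"
    have small: "c \<le> a - inner (p - z) (w - z) / \<kappa> + t * (N / (2 * \<kappa>))"
      if t: "0 < t" "t \<le> 1" for t
    proof -
      define zt where "zt = z + t *\<^sub>R (w - z)"
      have "ereal (c + q z) \<le> fconj g zt + ereal (q zt)"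
        using min[of zt] fz unfolding q_def by simp
      also have "\<dots> \<le> ereal ((1 - t) * c + t * a) + ereal (q zt)"
        using fconj_convex_comb[OF fz real, of t] t unfolding zt_def
        by (intro add_right_mono) (simp add: algebra_simps)
      finally have "c + q z \<le> (1 - t) * c + t * a + q zt"
        by simp
      moreover have "q zt = q z + t * (2 * inner (z - p) (w - z) + t * N) / (2 * \<kappa>)"
      proof -
        have "zt - p = (z - p) + t *\<^sub>R (w - z)"
          unfolding zt_def by simp
        then have "(norm (zt - p))\<^sup>2 = (norm (z - p))\<^sup>2 + 2 * t * inner (z - p) (w - z) + t\<^sup>2 * N"
          unfolding N_def by (simp only: norm_sq_add_scaleR)
        then show ?thesis
          unfolding q_def using k by (simp add: field_simps power2_eq_square)
      qed
      ultimately have "t * c \<le> t * (a + (2 * inner (z - p) (w - z) + t * N) / (2 * \<kappa>))"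
        by (simp add: algebra_simps)
      then have "c \<le> a + (2 * inner (z - p) (w - z) + t * N) / (2 * \<kappa>)"
        using t by simp
      moreover have "inner (z - p) (w - z) = - inner (p - z) (w - z)"
        by (metis inner_minus_left minus_diff_eq)
      then have "(2 * inner (z - p) (w - z) + t * N) / (2 * \<kappa>)
          = - inner (p - z) (w - z) / \<kappa> + t * (N / (2 * \<kappa>))"
        by (simp add: add_divide_distrib diff_divide_distrib)
      ultimately show ?thesis
        by linarith
    qed
    have "0 \<le> N / (2 * \<kappa>)"
      using k by (simp add: N_def)
    then have "c \<le> a - inner (p - z) (w - z) / \<kappa>"
      using small by (rule le_of_le_plus_small)
    then show ?thesis
      using real by simp
  qed (use fconj_finite[OF gp, of w] in auto)
qed

lemma prox_fconj_csubdiff: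
  fixes g :: "'a::euclidean_space \<Rightarrow> ereal"
  assumes gp: "proper_fun g" and k: "\<kappa> > 0" and fin: "fconj g (prox (fconj g) \<kappa> p) < \<infinity>"
  shows "(1 / \<kappa>) *\<^sub>R (p - prox (fconj g) \<kappa> p) \<in> csubdiff (fconj g) (prox (fconj g) \<kappa> p)"
proof -
  define P where "P y \<longleftrightarrow> (\<forall>w. fconj g y + ereal ((norm (y - p))\<^sup>2 / (2 * \<kappa>))
                           \<le> fconj g w + ereal ((norm (w - p))\<^sup>2 / (2 * \<kappa>)))" for y
  have "\<exists>!y. P y"
    using fconj_prox_objective_has_min[OF gp k fin] fconj_prox_objective_min_unique[OF gp k fin]
    unfolding P_def by metis
  then have "P (prox (fconj g) \<kappa> p)"
    unfolding prox_def P_def[symmetric] by (rule theI')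
  then show ?thesis
    using fconj_prox_objective_min_csubdiff[OF gp k fconj_finite[OF gp fin]] unfolding P_def by blast
qed

lemma convex_edom:
  assumes "convex_fun f"
  shows "convex (edom f)"
proof (rule convexI)
  fix x y :: 'a and u v :: real
  assume xy: "x \<in> edom f" "y \<in> edom f" and uv: "0 \<le> u" "0 \<le> v" "u + v = 1"
  have v: "v = 1 - u"
    using uv by simp
  have "f x < \<infinity>" "f y < \<infinity>"
    using xy by (auto simp: edom_def)
  then have "ereal u * f x + ereal v * f y < \<infinity>"
    using uv by (cases "f x"; cases "f y") auto
  moreover have "f (u *\<^sub>R x + v *\<^sub>R y) \<le> ereal u * f x + ereal v * f y"
    using assms uv unfolding convex_fun_def v by auto
  ultimately have "f (u *\<^sub>R x + v *\<^sub>R y) < \<infinity>"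
    by (meson le_less_trans)
  then show "u *\<^sub>R x + v *\<^sub>R y \<in> edom f"
    by (simp add: edom_def)
qed

lemma convex_fun_continuous_on_interior:
  fixes f :: "'a::euclidean_space \<Rightarrow> ereal"
  assumes fp: "proper_fun f" and fc: "convex_fun f"
  shows "continuous_on (interior (edom f)) (\<lambda>x. real_of_ereal (f x))"
proof (rule convex_on_continuous)
  have fin: "f x = ereal (real_of_ereal (f x))" if "x \<in> interior (edom f)" for x
    using proper_fun_finite[OF fp] that interior_subset[of "edom f"] unfolding edom_def by auto
  have cvx: "convex (interior (edom f))"
    by (rule convex_interior[OF convex_edom[OF fc]])
  show "convex_on (interior (edom f)) (\<lambda>x. real_of_ereal (f x))"
  proof (rule convex_onI)
    fix t :: real and x y
    assume t: "0 < t" "t < 1" and xy: "x \<in> interior (edom f)" "y \<in> interior (edom f)"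
    have m: "(1 - t) *\<^sub>R x + t *\<^sub>R y \<in> interior (edom f)"
      using cvx xy t unfolding convex_alt by auto
    have "f (t *\<^sub>R y + (1 - t) *\<^sub>R x) \<le> ereal t * f y + ereal (1 - t) * f x"
      using fc t unfolding convex_fun_def by auto
    then show "real_of_ereal (f ((1 - t) *\<^sub>R x + t *\<^sub>R y))
        \<le> (1 - t) * real_of_ereal (f x) + t * real_of_ereal (f y)"
      using fin[OF m] fin[OF xy(1)] fin[OF xy(2)]
      by (metis add.commute ereal_less_eq(3) plus_ereal.simps(1) times_ereal.simps(1))
  qed (rule cvx)
qed simp

text \<open>Subgradients at \<open>c\<close> are bounded by the oscillation of \<open>f\<close> on a ball around \<open>c\<close>.\<close>

lemma csubdiff_bounded_on_compact:
  fixes f :: "'a::euclidean_space \<Rightarrow> ereal"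
  assumes fp: "proper_fun f" and fc: "convex_fun f"
    and C: "compact C" and Cint: "C \<subseteq> interior (edom f)"
  obtains B where "\<And>c y. c \<in> C \<Longrightarrow> y \<in> csubdiff f c \<Longrightarrow> norm y \<le> B"
proof -
  define D where "D = interior (edom f)"
  obtain r where r: "r > 0" "(\<Union>c\<in>C. cball c r) \<subseteq> D"
    using compact_subset_open_imp_cball_epsilon_subset[OF C _ Cint] unfolding D_def by auto
  define C' where "C' = (\<Union>c\<in>C. cball c r)"
  have "compact C'"
  proof -
    have eq: "C' = {x + y | x y. x \<in> C \<and> y \<in> cball 0 r}"
      unfolding C'_def by (auto simp: dist_norm) (metis add_diff_cancel_left' diff_add_cancel norm_minus_commute)
    show ?thesis
      unfolding eq by (rule compact_sums[OF C compact_cball])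
  qed
  moreover have "continuous_on C' (\<lambda>x. real_of_ereal (f x))"
    using continuous_on_subset[OF convex_fun_continuous_on_interior[OF fp fc]] r(2)
    unfolding C'_def D_def by blast
  ultimately obtain B0 where B0: "\<And>x. x \<in> C' \<Longrightarrow> \<bar>real_of_ereal (f x)\<bar> \<le> B0"
    using compact_continuous_image compact_imp_bounded bounded_iff by (metis image_eqI real_norm_def)
  have fin: "f x = ereal (real_of_ereal (f x))" if "x \<in> C'" for x
    using proper_fun_finite[OF fp] that r(2) interior_subset[of "edom f"]
    unfolding C'_def D_def edom_def by blast
  have "r * norm y \<le> 2 * B0" if c: "c \<in> C" and y: "y \<in> csubdiff f c" for c y
  proof (cases "y = 0")
    case True
    have "c \<in> C'"
      unfolding C'_def using c r by (intro UN_I[of c]) auto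
    then have "0 \<le> B0"
      using B0 abs_ge_zero order_trans by blast
    then show ?thesis
      using True by simp
  next
    case False
    define d where "d = (r / norm y) *\<^sub>R y"
    have "c \<in> cball c r" "c + d \<in> cball c r"
      using r False by (auto simp: d_def dist_norm)
    then have "c \<in> C'" "c + d \<in> C'"
      unfolding C'_def using c by blast+
    moreover have "f c + ereal (inner y d) \<le> f (c + d)"
      using y unfolding in_csubdiff_iff by (metis add_diff_cancel_left')
    moreover have "inner y d = r * norm y"
      unfolding d_def using False by (simp add: power2_norm_eq_inner[symmetric] power2_eq_square)
    ultimately show ?thesis
      using B0 fin by (smt (verit) ereal_less_eq(3) plus_ereal.simps(1))
  qed
  then have "norm y \<le> 2 * B0 / r" if "c \<in> C" "y \<in> csubdiff f c" for c y
    using that r(1) by (simp add: field_simps)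
  then show ?thesis
    using that by blast
qed

lemma csubdiff_fconj_fenchel_young_eq:
  assumes "y \<in> csubdiff f c"
  shows "fconj f y = ereal (inner c y) - f c" and "c \<in> csubdiff (fconj f) y"
proof -
  obtain a where fc: "f c = ereal a" and sub: "\<And>w. ereal (a + inner y (w - c)) \<le> f w"
    using in_csubdiff_realE[OF assms] by blast
  have "fconj f y \<le> ereal (inner c y - a)"
  proof (rule fconj_le_of_affine_minorant)
    fix w
    have "inner w y - (inner c y - a) = a + inner y (w - c)"
      by (simp add: inner_diff_right inner_commute)
    then show "ereal (inner w y - (inner c y - a)) \<le> f w"
      using sub[of w] by metis
  qed
  moreover have "ereal (inner c y - a) \<le> fconj f y"
    using fenchel_young[of c y f] fc by simp
  ultimately have eq: "fconj f y = ereal (inner c y - a)"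
    by (rule antisym)
  then show "fconj f y = ereal (inner c y) - f c"
    using fc by simp
  show "c \<in> csubdiff (fconj f) y"
  proof (rule in_csubdiff_realI[where \<phi> = "fconj f", OF eq])
    show "ereal (inner c y - a + inner c (w - y)) \<le> fconj f w" for w
      using fenchel_young[of c w f] fc by (simp add: inner_diff_right)
  qed
qed

section \<open>Frechet subgradients relative to a set\<close>

definition fsubgrad_within :: "('a::real_inner \<Rightarrow> real) \<Rightarrow> 'a set \<Rightarrow> 'a \<Rightarrow> 'a \<Rightarrow> bool" where
  "fsubgrad_within \<phi> D x v \<longleftrightarrow> (\<forall>e>0. \<exists>d>0. \<forall>w\<in>D. norm (w - x) < d \<longrightarrow>
      \<phi> x + inner v (w - x) - e * norm (w - x) \<le> \<phi> w)"

lemma fsubgrad_withinD: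
  assumes "fsubgrad_within \<phi> D x v" "e > 0"
  obtains d where "d > 0" "\<And>w. w \<in> D \<Longrightarrow> norm (w - x) < d \<Longrightarrow>
      \<phi> x + inner v (w - x) - e * norm (w - x) \<le> \<phi> w"
  using assms unfolding fsubgrad_within_def by blast

lemma fsubgrad_within_subset:
  assumes "fsubgrad_within \<phi> D x v" "D' \<subseteq> D"
  shows "fsubgrad_within \<phi> D' x v"
  using assms unfolding fsubgrad_within_def by blast

lemma fsubgrad_within_add:
  assumes \<phi>: "fsubgrad_within \<phi> D x v" and \<psi>: "fsubgrad_within \<psi> D x w"
  shows "fsubgrad_within (\<lambda>y. \<phi> y + \<psi> y) D x (v + w)"
  unfolding fsubgrad_within_def
proof (intro allI impI)
  fix e :: real
  assume e: "e > 0"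
  obtain d1 where d1: "d1 > 0" "\<And>y. y \<in> D \<Longrightarrow> norm (y - x) < d1 \<Longrightarrow>
      \<phi> x + inner v (y - x) - e / 2 * norm (y - x) \<le> \<phi> y"
    using fsubgrad_withinD[OF \<phi>, of "e / 2"] e by auto
  obtain d2 where d2: "d2 > 0" "\<And>y. y \<in> D \<Longrightarrow> norm (y - x) < d2 \<Longrightarrow>
      \<psi> x + inner w (y - x) - e / 2 * norm (y - x) \<le> \<psi> y"
    using fsubgrad_withinD[OF \<psi>, of "e / 2"] e by auto
  show "\<exists>d>0. \<forall>y\<in>D. norm (y - x) < d \<longrightarrow>
      \<phi> x + \<psi> x + inner (v + w) (y - x) - e * norm (y - x) \<le> \<phi> y + \<psi> y"
    using d1 d2 by (intro exI[of _ "min d1 d2"]) (force simp: inner_add_left)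
qed

lemma has_derivative_imp_fsubgrad_within:
  assumes "(\<phi> has_derivative (\<lambda>h. inner v h)) (at x)"
  shows "fsubgrad_within \<phi> D x v"
  unfolding fsubgrad_within_def
proof (intro allI impI)
  fix e :: real
  assume "e > 0"
  then obtain d where "d > 0" "\<forall>y. norm (y - x) < d \<longrightarrow>
      norm (\<phi> y - \<phi> x - inner v (y - x)) \<le> e * norm (y - x)"
    using assms unfolding has_derivative_at_alt by blast
  then show "\<exists>d>0. \<forall>w\<in>D. norm (w - x) < d \<longrightarrow> \<phi> x + inner v (w - x) - e * norm (w - x) \<le> \<phi> w"
    by (force simp: abs_le_iff)
qed

lemma normal_imp_fsubgrad_within:
  assumes "\<And>w. w \<in> D \<Longrightarrow> inner N (w - x) \<le> 0"
  shows "fsubgrad_within (\<lambda>_. 0) D x N"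
  unfolding fsubgrad_within_def
proof (intro allI impI)
  fix e :: real
  assume "e > 0"
  have "0 + inner N (w - x) - e * norm (w - x) \<le> 0" if "w \<in> D" for w
  proof -
    have "0 \<le> e * norm (w - x)"
      using \<open>e > 0\<close> by simp
    then show ?thesis
      using assms[OF that] by simp
  qed
  then show "\<exists>d>0. \<forall>w\<in>D. norm (w - x) < d \<longrightarrow> 0 + inner N (w - x) - e * norm (w - x) \<le> 0"
    by (intro exI[of _ 1]) auto
qed

lemma csubdiff_imp_fsubgrad_within:
  assumes "v \<in> csubdiff \<phi> x"
  shows "fsubgrad_within (\<lambda>y. real_of_ereal (\<phi> y)) (edom \<phi>) x v"
  unfolding fsubgrad_within_def
proof (intro allI impI)
  fix e :: real
  assume e: "e > 0"
  obtain c where c: "\<phi> x = ereal c" and sub: "\<And>w. ereal (c + inner v (w - x)) \<le> \<phi> w"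
    using in_csubdiff_realE[OF assms] by blast
  have "c + inner v (w - x) - e * norm (w - x) \<le> real_of_ereal (\<phi> w)" if "w \<in> edom \<phi>" for w
  proof -
    have "0 \<le> e * norm (w - x)"
      using e by simp
    then show ?thesis
      using sub[of w] that by (cases "\<phi> w") (auto simp: edom_def)
  qed
  then show "\<exists>d>0. \<forall>w\<in>edom \<phi>. norm (w - x) < d \<longrightarrow>
      real_of_ereal (\<phi> x) + inner v (w - x) - e * norm (w - x) \<le> real_of_ereal (\<phi> w)"
    using c by (intro exI[of _ 1]) auto
qed

lemma fsubgrad_within_linear_comp:
  assumes \<phi>: "fsubgrad_within \<phi> D y v" and Px: "P x = y" and P: "linear P"
    and nP: "\<And>h. norm (P h) \<le> norm h" and adj: "\<And>h. inner v (P h) = inner v' h" and E: "E \<subseteq> P -` D"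
  shows "fsubgrad_within (\<lambda>w. \<phi> (P w)) E x v'"
  unfolding fsubgrad_within_def
proof (intro allI impI)
  fix e :: real
  assume "e > 0"
  then obtain d where d: "d > 0" "\<And>y'. y' \<in> D \<Longrightarrow> norm (y' - P x) < d \<Longrightarrow>
      \<phi> (P x) + inner v (y' - P x) - e * norm (y' - P x) \<le> \<phi> y'"
    using fsubgrad_withinD[OF \<phi>[folded Px]] by blast
  have "\<phi> (P x) + inner v' (w - x) - e * norm (w - x) \<le> \<phi> (P w)"
    if "w \<in> E" "norm (w - x) < d" for w
  proof -
    have "norm (P w - P x) \<le> norm (w - x)"
      using nP[of "w - x"] linear_diff[OF P] by simp
    then have "\<phi> (P x) + inner v (P w - P x) - e * norm (w - x) \<le> \<phi> (P w)"
      using d(2)[of "P w"] that E \<open>e > 0\<close> by (smt (verit) mult_left_mono subsetD vimageE)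
    then show ?thesis
      using adj[of "w - x"] linear_diff[OF P] by simp
  qed
  then show "\<exists>d>0. \<forall>w\<in>E. norm (w - x) < d \<longrightarrow>
      \<phi> (P x) + inner v' (w - x) - e * norm (w - x) \<le> \<phi> (P w)"
    using d(1) by blast
qed

lemma fsubgrad_within_imp_fsubdiff:
  assumes "x \<in> D" and fin: "\<And>w. w \<in> D \<Longrightarrow> \<Phi> w = ereal (\<phi> w)"
    and inf: "\<And>w. w \<notin> D \<Longrightarrow> \<Phi> w = \<infinity>" and sub: "fsubgrad_within \<phi> D x v"
  shows "v \<in> fsubdiff \<Phi> x"
proof -
  have "\<exists>d>0. \<forall>w. norm (w - x) < d \<longrightarrow> \<Phi> x + ereal (inner v (w - x) - e * norm (w - x)) \<le> \<Phi> w"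
    if e: "e > 0" for e
  proof -
    obtain d where d: "d > 0" "\<And>w. w \<in> D \<Longrightarrow> norm (w - x) < d \<Longrightarrow>
        \<phi> x + inner v (w - x) - e * norm (w - x) \<le> \<phi> w"
      using fsubgrad_withinD[OF sub e] by blast
    have "\<Phi> x + ereal (inner v (w - x) - e * norm (w - x)) \<le> \<Phi> w" if "norm (w - x) < d" for w
    proof (cases "w \<in> D")
      case True
      then show ?thesis
        using d(2)[OF True that] fin[OF True] fin[OF \<open>x \<in> D\<close>] by (simp add: algebra_simps)
    qed (use inf in simp)
    then show ?thesis
      using d(1) by blast
  qed
  then show ?thesis
    unfolding fsubdiff_def using fin[OF \<open>x \<in> D\<close>] by simp
qed

lemma fsubdiff_subset_lsubdiff: "fsubdiff \<phi> x \<subseteq> lsubdiff \<phi> x"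
proof
  fix v
  assume v: "v \<in> fsubdiff \<phi> x"
  then have "\<bar>\<phi> x\<bar> \<noteq> \<infinity>"
    unfolding fsubdiff_def by (auto split: if_splits)
  moreover have "\<exists>ws vs. ws \<longlonglongrightarrow> x \<and> (\<lambda>k. \<phi> (ws k)) \<longlonglongrightarrow> \<phi> x \<and>
      (\<forall>k. vs k \<in> fsubdiff \<phi> (ws k)) \<and> vs \<longlonglongrightarrow> v"
    using v by (intro exI[of _ "\<lambda>_. x"] exI[of _ "\<lambda>_. v"]) simp
  ultimately show "v \<in> lsubdiff \<phi> x"
    unfolding lsubdiff_def by simp
qed

lemma dist0_le_norm: "v \<in> C \<Longrightarrow> dist0 C \<le> ereal (norm v)"
  unfolding dist0_def using infdist_le[of v C 0] by auto

text \<open>The numerator \<open>bw * T\<close> below is compared with \<open>aw\<close> rather than dividing, so that only an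
  upper bound for the denominator is needed; the cross terms are quadratic in \<open>r\<close>.\<close>

lemma quotient_lower_estimate:
  fixes ax bx aw bw la lb r e e1 Ca Cb :: real
  assumes bx: "0 < bx" and bw: "0 < bw" and r: "0 \<le> r" and e1: "0 \<le> e1" and e: "0 \<le> e"
    and Ca: "0 \<le> Ca" and Cb: "0 \<le> Cb"
    and la: "\<bar>la\<bar> \<le> Ca * r" and lb: "\<bar>lb\<bar> \<le> Cb * r"
    and aw: "ax + la - e1 * r \<le> aw" and bwle: "bw \<le> bx + lb + e1 * r"
    and small1: "(Ca + e1) * r \<le> ax"
    and small2: "e1 * (1 + ax / bx) \<le> e * bx / 2"
    and small3: "(Cb + e1) * ((Ca + ax / bx * Cb) / bx + e) * r \<le> e * bx / 2"
  shows "ax / bx + (la - ax / bx * lb) / bx - e * r \<le> aw / bw"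
proof -
  define t where "t = ax / bx"
  define T where "T = t + (la - t * lb) / bx - e * r"
  have "0 \<le> aw"
    using aw la small1 by (simp add: abs_le_iff algebra_simps)
  show ?thesis
  proof (cases "T \<le> 0")
    case True
    then show ?thesis
      using \<open>0 \<le> aw\<close> bw unfolding T_def t_def by (smt (verit) divide_nonneg_pos)
  next
    case False
    have "0 \<le> ax"
      using small1 Ca e1 r by (meson mult_nonneg_nonneg add_nonneg_nonneg order_trans)
    then have "0 \<le> t"
      unfolding t_def using bx by simp
    have "\<bar>la - t * lb\<bar> \<le> Ca * r + t * (Cb * r)"
      using abs_triangle_ineq4[of la "t * lb"] la mult_left_mono[OF lb \<open>0 \<le> t\<close>] \<open>0 \<le> t\<close>
      by (simp add: abs_mult)
    then have "\<bar>T - t\<bar> \<le> (Ca * r + t * (Cb * r)) / bx + e * r"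
      unfolding T_def using bx e r abs_triangle_ineq4[of "(la - t * lb) / bx" "e * r"]
      by (simp add: divide_right_mono order_trans)
    then have dev: "\<bar>T - t\<bar> \<le> ((Ca + t * Cb) / bx + e) * r"
      by (simp add: algebra_simps add_divide_distrib)
    have "\<bar>lb + e1 * r\<bar> \<le> (Cb + e1) * r"
      using abs_triangle_ineq[of lb "e1 * r"] lb e1 r by (simp add: algebra_simps)
    then have "\<bar>(lb + e1 * r) * (T - t)\<bar> \<le> ((Cb + e1) * r) * (((Ca + t * Cb) / bx + e) * r)"
      unfolding abs_mult using dev by (rule mult_mono) (use Cb e1 r in auto)
    then have "(lb + e1 * r) * (T - t) \<le> ((Cb + e1) * r) * (((Ca + t * Cb) / bx + e) * r)"
      by simp
    also have "\<dots> \<le> e * bx / 2 * r"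
      using mult_right_mono[OF small3 r] unfolding t_def by (simp add: algebra_simps)
    finally have cross: "(lb + e1 * r) * (T - t) \<le> e * bx / 2 * r" .
    have lin: "e1 * r * (1 + t) \<le> e * bx / 2 * r"
      using mult_right_mono[OF small2 r] unfolding t_def by (simp add: algebra_simps)
    have "bw * T \<le> (bx + lb + e1 * r) * T"
      using bwle False by (simp add: mult_right_mono)
    also have "\<dots> = ax + la - e * r * bx + e1 * r * t + (lb + e1 * r) * (T - t)"
      unfolding T_def t_def using bx by (simp add: field_simps)
    also have "\<dots> \<le> aw"
      using aw cross lin by (simp add: algebra_simps)
    finally have "T \<le> aw / bw"
      using bw by (simp add: pos_le_divide_eq mult.commute)
    then show ?thesis
      unfolding T_def t_def .
  qed
qed

lemma fsubgrad_within_divide: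
  assumes a: "fsubgrad_within a D x va" and b: "fsubgrad_within (\<lambda>w. - b w) D x (- vb)"
    and ax: "a x > 0" and bx: "b x > 0" and bpos: "\<And>w. w \<in> D \<Longrightarrow> b w > 0"
  shows "fsubgrad_within (\<lambda>w. a w / b w) D x ((1 / b x) *\<^sub>R (va - (a x / b x) *\<^sub>R vb))"
  unfolding fsubgrad_within_def
proof (intro allI impI)
  fix e :: real
  assume e: "e > 0"
  define t where "t = a x / b x"
  define Ca where "Ca = norm va"
  define Cb where "Cb = norm vb"
  define e1 where "e1 = e * b x / (2 * (1 + t))"
  define C where "C = (Cb + e1) * ((Ca + t * Cb) / b x + e)"
  have t: "t > 0"
    unfolding t_def using ax bx by simp
  have e1: "e1 > 0"
    unfolding e1_def using e bx t by simp
  have C: "C \<ge> 0"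
    unfolding C_def Ca_def Cb_def using e1 e t bx by simp
  obtain da where da: "da > 0" "\<And>w. w \<in> D \<Longrightarrow> norm (w - x) < da \<Longrightarrow>
      a x + inner va (w - x) - e1 * norm (w - x) \<le> a w"
    using fsubgrad_withinD[OF a e1] by blast
  obtain db where db: "db > 0" "\<And>w. w \<in> D \<Longrightarrow> norm (w - x) < db \<Longrightarrow>
      - b x + inner (- vb) (w - x) - e1 * norm (w - x) \<le> - b w"
    using fsubgrad_withinD[OF b e1] by blast
  define d where "d = min (min da db) (min (a x / (Ca + e1 + 1)) (e * b x / (2 * C + 1)))"
  have Ce1: "0 < Ca + e1 + 1"
    unfolding Ca_def using e1 by (simp add: add_nonneg_pos)
  then have d: "d > 0"
    unfolding d_def using da db ax e bx C by simp
  have "a x / b x + inner ((1 / b x) *\<^sub>R (va - (a x / b x) *\<^sub>R vb)) (w - x) - e * norm (w - x)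
      \<le> a w / b w" if w: "w \<in> D" "norm (w - x) < d" for w
  proof -
    define r where "r = norm (w - x)"
    have r: "0 \<le> r" "r < da" "r < db" "r < a x / (Ca + e1 + 1)" "r < e * b x / (2 * C + 1)"
      using w(2) unfolding r_def d_def by auto
    have small1: "(Ca + e1) * r \<le> a x"
    proof -
      have "(Ca + e1 + 1) * r < a x"
        using r(4) Ce1 by (simp add: pos_less_divide_eq mult.commute)
      then show ?thesis
        using r(1) by (simp add: algebra_simps)
    qed
    have small2: "e1 * (1 + a x / b x) \<le> e * b x / 2"
      unfolding e1_def t_def[symmetric] using t by (simp add: field_simps)
    have small3: "(Cb + e1) * ((Ca + a x / b x * Cb) / b x + e) * r \<le> e * b x / 2"
    proof -
      have "C * r \<le> C * (e * b x / (2 * C + 1))"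
        using r(5) C by (intro mult_left_mono) auto
      also have "\<dots> \<le> e * b x / 2"
        using C e bx by (simp add: field_simps)
      finally show ?thesis
        unfolding C_def t_def .
    qed
    have "a x / b x + (inner va (w - x) - a x / b x * inner vb (w - x)) / b x - e * r \<le> a w / b w"
    proof (rule quotient_lower_estimate[OF bx bpos[OF w(1)] r(1) less_imp_le[OF e1] less_imp_le[OF e] _ _ _ _ _ _ small1 small2 small3])
      show "0 \<le> Ca" "0 \<le> Cb"
        unfolding Ca_def Cb_def by simp_all
      show "\<bar>inner va (w - x)\<bar> \<le> Ca * r" "\<bar>inner vb (w - x)\<bar> \<le> Cb * r"
        unfolding Ca_def Cb_def r_def by (rule Cauchy_Schwarz_ineq2)+
      show "a x + inner va (w - x) - e1 * r \<le> a w"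
        using da(2)[OF w(1)] r(2) unfolding r_def by simp
      show "b w \<le> b x + inner vb (w - x) + e1 * r"
        using db(2)[OF w(1)] r(3) unfolding r_def by simp
    qed
    then show ?thesis
      unfolding r_def by (simp add: inner_diff_left)
  qed
  then show "\<exists>d>0. \<forall>w\<in>D. norm (w - x) < d \<longrightarrow>
      a x / b x + inner ((1 / b x) *\<^sub>R (va - (a x / b x) *\<^sub>R vb)) (w - x) - e * norm (w - x) \<le> a w / b w"
    using d by blast
qed

lemma fconj_fsubgrad_within:
  fixes g :: "'a::euclidean_space \<Rightarrow> ereal"
  assumes gp: "proper_fun g" and gc: "convex_fun g" and gl: "lsc_fun g"
    and es: "ess_strictly_convex g" and v: "v \<in> csubdiff (fconj g) z"
  shows "fsubgrad_within (\<lambda>z'. - real_of_ereal (fconj g z')) (edom (fconj g)) z (- v)"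
  unfolding fsubgrad_within_def
proof (intro allI impI)
  fix e :: real
  assume "e > 0"
  then obtain d where d: "d > 0" "\<And>z'. norm (z' - z) < d \<Longrightarrow>
      fconj g z' \<le> fconj g z + ereal (inner v (z' - z) + e * norm (z' - z))"
    using fconj_upper_estimate[OF gp gc gl es v] by blast
  obtain c where c: "fconj g z = ereal c"
    using v by (rule in_csubdiff_realE)
  have "- c + inner (- v) (z' - z) - e * norm (z' - z) \<le> - real_of_ereal (fconj g z')"
    if z': "z' \<in> edom (fconj g)" and zd: "norm (z' - z) < d" for z'
  proof -
    obtain G' where G': "fconj g z' = ereal G'"
      using fconj_finite[OF gp] z' by (auto simp: edom_def)
    then have "G' \<le> c + (inner v (z' - z) + e * norm (z' - z))"
      using d(2)[OF zd] c by simp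
    then show ?thesis
      using G' by simp
  qed
  then show "\<exists>d>0. \<forall>z'\<in>edom (fconj g). norm (z' - z) < d \<longrightarrow>
      - real_of_ereal (fconj g z) + inner (- v) (z' - z) - e * norm (z' - z) \<le> - real_of_ereal (fconj g z')"
    using d(1) c by auto
qed

section \<open>The fractional function\<close>

definition psi :: "('n::real_inner \<Rightarrow> 's::real_inner) \<Rightarrow> ('s \<Rightarrow> ereal) \<Rightarrow> ('n \<Rightarrow> real)
    \<Rightarrow> real \<Rightarrow> real \<Rightarrow> 'n \<Rightarrow> 's \<Rightarrow> 'n \<Rightarrow> real" where
  "psi A g h \<delta> \<gamma> x z u = inner z (A x) + h x + \<delta> / 2 * (norm (x - u))\<^sup>2 - \<gamma> / 2 * (norm z)\<^sup>2
     - real_of_ereal (fconj g z)"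

definition fenchel_minorant :: "('n \<Rightarrow> 'p::real_inner) \<Rightarrow> ('p \<Rightarrow> ereal) \<Rightarrow> 'n \<Rightarrow> 'p \<Rightarrow> real" where
  "fenchel_minorant K f x y = inner (K x) y - real_of_ereal (fconj f y)"

lemma Psi_eq_psi:
  assumes "x \<in> S" "fconj g z = ereal G"
  shows "Psi S A g h x z u \<delta> \<gamma> = ereal (psi A g h \<delta> \<gamma> x z u)"
  using assms unfolding Psi_def psi_def by simp

lemma Gamma_eq_quotient:
  assumes gp: "proper_fun g" and fp: "proper_fun f" and m: "m > 0"
  shows "Gamma S A K g f h \<delta> \<gamma> m (x, y, z, u) =
    (if x \<in> S \<and> y \<in> edom (fconj f) \<and> m / 2 < fenchel_minorant K f x y \<and> z \<in> edom (fconj g)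
     then ereal (psi A g h \<delta> \<gamma> x z u / fenchel_minorant K f x y) else \<infinity>)"
proof (cases "y \<in> edom (fconj f) \<and> z \<in> edom (fconj g)")
  case True
  then obtain F G where "fconj f y = ereal F" "fconj g z = ereal G"
    using fconj_finite[OF fp] fconj_finite[OF gp] unfolding edom_def by blast
  then show ?thesis
    using m unfolding Gamma_def by (auto simp: Psi_def psi_def fenchel_minorant_def)
qed (auto simp: Gamma_def)

lemma has_derivative_psi_smooth_part:
  fixes A :: "'n::euclidean_space \<Rightarrow> 's::euclidean_space" and h :: "'n \<Rightarrow> real"
  assumes lin: "linear A" and hd: "(h has_derivative (\<lambda>w. inner (dh) w)) (at x1)"
  shows "((\<lambda>(x, y::'p::euclidean_space, z, u). inner z (A x) + h x + \<delta> / 2 * (norm (x - u))\<^sup>2 - \<gamma> / 2 * (norm z)\<^sup>2)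
     has_derivative (\<lambda>w. inner (adjoint A z1 + dh + \<delta> *\<^sub>R (x1 - u1), 0, A x1 - \<gamma> *\<^sub>R z1,
                                 - \<delta> *\<^sub>R (x1 - u1)) w)) (at (x1, y1, z1, u1))"
proof -
  have bl: "bounded_linear A"
    using lin by (simp add: linear_conv_bounded_linear)
  have hd': "((\<lambda>w. h (fst w)) has_derivative (\<lambda>w. inner (dh) (fst w))) (at (x1, y1, z1, u1))"
    using has_derivative_compose[OF has_derivative_fst[OF has_derivative_ident],
        where x = "(x1, y1, z1, u1)" and s = UNIV, of h] hd by simp
  show ?thesis
    unfolding case_prod_beta power2_norm_eq_inner
    by (rule has_derivative_eq_rhs, (rule derivative_eq_intros bounded_linear.has_derivative[OF bl] hd' refl | simp)+)
      (auto simp: fun_eq_iff inner_Pair algebra_simps field_simps inner_commute adjoint_works[OF lin] linear_diff[OF lin])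
qed

lemma has_derivative_coupling:
  fixes K :: "'n::euclidean_space \<Rightarrow> 'p::euclidean_space"
  assumes lin: "linear K"
  shows "((\<lambda>(x, y, z::'s::euclidean_space, u::'n). inner (K x) y)
     has_derivative (\<lambda>w. inner (adjoint K y1, K x1, 0, 0) w)) (at (x1, y1, z1, u1))"
proof -
  have bl: "bounded_linear K"
    using lin by (simp add: linear_conv_bounded_linear)
  show ?thesis
    unfolding case_prod_beta
    by (rule has_derivative_eq_rhs, (rule derivative_eq_intros bounded_linear.has_derivative[OF bl] refl | simp)+)
      (auto simp: fun_eq_iff inner_Pair algebra_simps inner_commute adjoint_works[OF lin])
qed

lemma norm_tuple_components_le:
  fixes w :: "'a::real_normed_vector \<times> 'b::real_normed_vector \<times> 'c::real_normed_vector \<times> 'd::real_normed_vector"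
  shows "norm (fst (snd w)) \<le> norm w" "norm (fst (snd (snd w))) \<le> norm w"
proof -
  obtain a b c d where w: "w = (a, b, c, d)"
    by (cases w) auto
  show "norm (fst (snd w)) \<le> norm w" "norm (fst (snd (snd w))) \<le> norm w"
    using norm_fst_le[of c d] norm_fst_le[of b "(c, d)"] norm_snd_le[of "(c, d)" b]
      norm_snd_le[of "(b, c, d)" a] unfolding w by simp_all
qed

text \<open>The gradient of \<open>-g\<^sup>*\<close> cancels the \<open>z\<close>-derivative of the smooth part, and the constraint
  \<open>x \<in> S\<close> contributes the normal vector \<open>N\<close>.\<close>

lemma psi_fsubgrad_within:
  fixes A :: "'n::euclidean_space \<Rightarrow> 's::euclidean_space" and g :: "'s \<Rightarrow> ereal"
    and x' u' :: 'n and y' :: "'p::euclidean_space" and z' :: 's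
  assumes lin: "linear A" and g: "proper_fun g" "convex_fun g" "lsc_fun g" "ess_strictly_convex g"
    and N: "\<And>v. v \<in> S \<Longrightarrow> inner N (v - x') \<le> 0"
    and hd: "(h has_derivative (\<lambda>w. inner (gradh x') w)) (at x')"
    and gsub: "A x' - \<gamma> *\<^sub>R z' \<in> csubdiff (fconj g) z'"
    and D: "D \<subseteq> {(x, y, z, u). x \<in> S \<and> z \<in> edom (fconj g)}"
  shows "fsubgrad_within (\<lambda>(x, y, z, u). psi A g h \<delta> \<gamma> x z u) D (x', y', z', u')
           (adjoint A z' + gradh x' + \<delta> *\<^sub>R (x' - u') + N, 0, 0, - \<delta> *\<^sub>R (x' - u'))"
proof -
  have smooth: "fsubgrad_within (\<lambda>(x, y, z, u). inner z (A x) + h x + \<delta> / 2 * (norm (x - u))\<^sup>2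
      - \<gamma> / 2 * (norm z)\<^sup>2) D (x', y', z', u')
      (adjoint A z' + gradh x' + \<delta> *\<^sub>R (x' - u'), 0, A x' - \<gamma> *\<^sub>R z', - \<delta> *\<^sub>R (x' - u'))"
    by (rule has_derivative_imp_fsubgrad_within[OF has_derivative_psi_smooth_part[OF lin hd]])
  have conj: "fsubgrad_within (\<lambda>w. - real_of_ereal (fconj g (fst (snd (snd w))))) D (x', y', z', u')
      (0, 0, - (A x' - \<gamma> *\<^sub>R z'), 0)"
    by (rule fsubgrad_within_linear_comp[where P = "\<lambda>w. fst (snd (snd w))" and x = "(x', y', z', u')",
          OF fconj_fsubgrad_within[OF g gsub] _ _ norm_tuple_components_le(2)])
      (use D in \<open>auto simp: linear_iff inner_Pair\<close>)
  have normal: "fsubgrad_within (\<lambda>_. 0) D (x', y', z', u') (N, 0, 0, 0)"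
    using N D by (intro normal_imp_fsubgrad_within) (auto simp: inner_Pair)
  have "(\<lambda>(x, y::'p, z, u::'n). psi A g h \<delta> \<gamma> x z u) = (\<lambda>w. ((\<lambda>(x, y::'p, z, u::'n). inner z (A x) + h x
      + \<delta> / 2 * (norm (x - u))\<^sup>2 - \<gamma> / 2 * (norm z)\<^sup>2) w + - real_of_ereal (fconj g (fst (snd (snd w))))) + 0)"
    by (auto simp: psi_def fun_eq_iff)
  moreover have "(adjoint A z' + gradh x' + \<delta> *\<^sub>R (x' - u') + N, 0::'p, 0::'s, - \<delta> *\<^sub>R (x' - u'))
      = ((adjoint A z' + gradh x' + \<delta> *\<^sub>R (x' - u'), 0, A x' - \<gamma> *\<^sub>R z', - \<delta> *\<^sub>R (x' - u'))
         + (0, 0, - (A x' - \<gamma> *\<^sub>R z'), 0)) + (N, 0, 0, 0)"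
    by simp
  ultimately show ?thesis
    using fsubgrad_within_add[OF fsubgrad_within_add[OF smooth conj] normal] by simp
qed

lemma fenchel_minorant_fsubgrad_within:
  fixes K :: "'n::euclidean_space \<Rightarrow> 'p::euclidean_space" and f :: "'p \<Rightarrow> ereal"
    and x x' u' :: 'n and y' :: 'p and z' :: "'s::euclidean_space"
  assumes lin: "linear K" and fsub: "K x \<in> csubdiff (fconj f) y'"
    and D: "D \<subseteq> {(x, y, z, u). y \<in> edom (fconj f)}"
  shows "fsubgrad_within (\<lambda>(x, y, z, u). - fenchel_minorant K f x y) D (x', y', z', u')
           (- (adjoint K y', K x' - K x, 0, 0))"
proof -
  have coupling: "fsubgrad_within (\<lambda>w. - (\<lambda>(x, y, z::'s, u::'n). inner (K x) y) w) D (x', y', z', u')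
      (- (adjoint K y', K x', 0, 0))"
    by (rule has_derivative_imp_fsubgrad_within,
        rule has_derivative_eq_rhs[OF has_derivative_minus[OF has_derivative_coupling[OF lin]]])
      (simp add: fun_eq_iff)
  have conj: "fsubgrad_within (\<lambda>w. real_of_ereal (fconj f (fst (snd w)))) D (x', y', z', u') (0, K x, 0, 0)"
    by (rule fsubgrad_within_linear_comp[where P = "\<lambda>w. fst (snd w)" and x = "(x', y', z', u')",
          OF csubdiff_imp_fsubgrad_within[OF fsub] _ _ norm_tuple_components_le(1)])
      (use D in \<open>auto simp: linear_iff inner_Pair\<close>)
  have "(\<lambda>(x, y, z::'s, u::'n). - fenchel_minorant K f x y)
      = (\<lambda>w. - (\<lambda>(x, y, z::'s, u::'n). inner (K x) y) w + real_of_ereal (fconj f (fst (snd w))))"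
    by (auto simp: fenchel_minorant_def fun_eq_iff)
  moreover have "- (adjoint K y', K x' - K x, 0::'s, 0::'n) = - (adjoint K y', K x', 0, 0) + (0, K x, 0, 0)"
    by simp
  ultimately show ?thesis
    using fsubgrad_within_add[OF coupling conj] by simp
qed

lemma Gamma_fsubdiff:
  fixes S :: "'n::euclidean_space set" and A :: "'n \<Rightarrow> 's::euclidean_space"
    and K :: "'n \<Rightarrow> 'p::euclidean_space" and g :: "'s \<Rightarrow> ereal" and f :: "'p \<Rightarrow> ereal"
    and x x' u' :: 'n and y' :: 'p and z' :: 's
  assumes lin: "linear A" "linear K"
    and g: "proper_fun g" "convex_fun g" "lsc_fun g" "ess_strictly_convex g" and fp: "proper_fun f"
    and xS: "x' \<in> S" and N: "\<And>v. v \<in> S \<Longrightarrow> inner N (v - x') \<le> 0"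
    and hd: "(h has_derivative (\<lambda>w. inner (gradh x') w)) (at x')"
    and fsub: "K x \<in> csubdiff (fconj f) y'"
    and gsub: "A x' - \<gamma> *\<^sub>R z' \<in> csubdiff (fconj g) z'"
    and m: "m > 0" and den: "m / 2 < fenchel_minorant K f x' y'"
    and num: "0 < psi A g h \<delta> \<gamma> x' z' u'"
  shows "(1 / fenchel_minorant K f x' y') *\<^sub>R
           ((adjoint A z' + gradh x' + \<delta> *\<^sub>R (x' - u') + N, 0, 0, - \<delta> *\<^sub>R (x' - u'))
            - (psi A g h \<delta> \<gamma> x' z' u' / fenchel_minorant K f x' y') *\<^sub>R (adjoint K y', K x' - K x, 0, 0))
         \<in> fsubdiff (Gamma S A K g f h \<delta> \<gamma> m) (x', y', z', u')"
proof -
  define D where "D = {(x, y, z, u::'n). x \<in> S \<and> y \<in> edom (fconj f) \<and> m / 2 < fenchel_minorant K f x y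
                        \<and> z \<in> edom (fconj g)}"
  define a where "a = (\<lambda>(x, y::'p, z, u::'n). psi A g h \<delta> \<gamma> x z u)"
  define b where "b = (\<lambda>(x, y, z::'s, u::'n). fenchel_minorant K f x y)"
  have "fsubgrad_within a D (x', y', z', u')
      (adjoint A z' + gradh x' + \<delta> *\<^sub>R (x' - u') + N, 0, 0, - \<delta> *\<^sub>R (x' - u'))"
    unfolding a_def by (rule psi_fsubgrad_within[where gradh = gradh and x' = x', OF lin(1) g N hd gsub])
      (auto simp: D_def)
  moreover have "fsubgrad_within (\<lambda>w. - b w) D (x', y', z', u') (- (adjoint K y', K x' - K x, 0, 0))"
  proof -
    have "(\<lambda>w. - b w) = (\<lambda>(x, y, z, u). - fenchel_minorant K f x y)"
      by (auto simp: b_def fun_eq_iff)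
    then show ?thesis
      using fenchel_minorant_fsubgrad_within[where x' = x' and y' = y' and z' = z' and u' = u', OF lin(2) fsub]
      by (simp add: D_def subset_iff)
  qed
  ultimately have "fsubgrad_within (\<lambda>w. a w / b w) D (x', y', z', u')
      ((1 / b (x', y', z', u')) *\<^sub>R ((adjoint A z' + gradh x' + \<delta> *\<^sub>R (x' - u') + N, 0, 0, - \<delta> *\<^sub>R (x' - u'))
       - (a (x', y', z', u') / b (x', y', z', u')) *\<^sub>R (adjoint K y', K x' - K x, 0, 0)))"
    using den num m by (intro fsubgrad_within_divide) (auto simp: a_def b_def D_def)
  then have sub: "fsubgrad_within (\<lambda>w. a w / b w) D (x', y', z', u')
      ((1 / fenchel_minorant K f x' y') *\<^sub>R
        ((adjoint A z' + gradh x' + \<delta> *\<^sub>R (x' - u') + N, 0, 0, - \<delta> *\<^sub>R (x' - u'))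
         - (psi A g h \<delta> \<gamma> x' z' u' / fenchel_minorant K f x' y') *\<^sub>R (adjoint K y', K x' - K x, 0, 0)))"
    by (simp add: a_def b_def)
  show ?thesis
  proof (rule fsubgrad_within_imp_fsubdiff[OF _ _ _ sub])
    show "(x', y', z', u') \<in> D"
      using xS den fsub gsub by (auto simp: D_def edom_def in_csubdiff_iff)
    show "Gamma S A K g f h \<delta> \<gamma> m w = ereal (a w / b w)" if "w \<in> D" for w
      using that by (auto simp: Gamma_eq_quotient[OF g(1) fp m] a_def b_def D_def)
    show "Gamma S A K g f h \<delta> \<gamma> m w = \<infinity>" if "w \<notin> D" for w
    proof -
      obtain x y z u where "w = (x, y, z, u)"
        by (cases w) auto
      then show ?thesis
        using that by (simp add: Gamma_eq_quotient[OF g(1) fp m] D_def)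
    qed
  qed
qed

section \<open>The stabilised iteration\<close>

lemma lipschitz_constant_nonneg:
  fixes F :: "'a::euclidean_space \<Rightarrow> 'b::real_normed_vector"
  assumes U: "open U" "s \<in> U" and lip: "\<And>v w. v \<in> U \<Longrightarrow> w \<in> U \<Longrightarrow> norm (F v - F w) \<le> L * norm (v - w)"
  shows "0 \<le> L"
proof -
  obtain r where r: "r > 0" "ball s r \<subseteq> U"
    using U open_contains_ball by blast
  obtain b :: 'a where b: "b \<in> Basis"
    using nonempty_Basis by blast
  define w where "w = s + (r / 2) *\<^sub>R b"
  have nw: "norm (w - s) = r / 2"
    unfolding w_def using b r by simp
  then have "w \<in> U"
    using r by (auto simp: dist_norm norm_minus_commute)
  then have "0 \<le> L * (r / 2)"
    using lip[of w s] U(2) nw by (metis norm_ge_zero order_trans)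
  then show ?thesis
    using r by (simp add: zero_le_mult_iff)
qed

lemma closest_point_normal:
  fixes S :: "'a::euclidean_space set"
  assumes "closed S" "convex S" "S \<noteq> {}" "x' \<in> S"
  shows "inner (p - closest_point S p) (x' - closest_point S p) \<le> 0"
  using any_closest_point_dot[OF assms(2,1) closest_point_in_set[OF assms(1,3)] assms(4)]
    closest_point_le[OF assms(1)] by blast

lemma abs_norm_sq_diff_le:
  fixes p q :: "'a::real_normed_vector"
  shows "\<bar>(norm p)\<^sup>2 - (norm q)\<^sup>2\<bar> \<le> norm (p - q) * (norm p + norm q)"
proof -
  have "(norm p)\<^sup>2 - (norm q)\<^sup>2 = (norm p - norm q) * (norm p + norm q)"
    by (simp add: power2_eq_square algebra_simps)
  then have "\<bar>(norm p)\<^sup>2 - (norm q)\<^sup>2\<bar> = \<bar>norm p - norm q\<bar> * (norm p + norm q)"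
    by (simp add: abs_mult)
  also have "\<dots> \<le> norm (p - q) * (norm p + norm q)"
    by (intro mult_right_mono norm_triangle_ineq3) auto
  finally show ?thesis .
qed

lemma csubdiff_value_diff_le:
  assumes v0: "v0 \<in> csubdiff \<phi> z0" and v1: "v1 \<in> csubdiff \<phi> z1"
    and B: "norm v0 \<le> B" "norm v1 \<le> B"
  shows "\<bar>real_of_ereal (\<phi> z0) - real_of_ereal (\<phi> z1)\<bar> \<le> B * norm (z0 - z1)"
proof -
  obtain c0 where c0: "\<phi> z0 = ereal c0" "\<And>w. ereal (c0 + inner v0 (w - z0)) \<le> \<phi> w"
    using in_csubdiff_realE[OF v0] by blast
  obtain c1 where c1: "\<phi> z1 = ereal c1" "\<And>w. ereal (c1 + inner v1 (w - z1)) \<le> \<phi> w"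
    using in_csubdiff_realE[OF v1] by blast
  have "c0 + inner v0 (z1 - z0) \<le> c1" "c1 + inner v1 (z0 - z1) \<le> c0"
    using c0(2)[of z1] c1(2)[of z0] c0(1) c1(1) by simp_all
  moreover have "\<bar>inner v0 (z1 - z0)\<bar> \<le> B * norm (z0 - z1)" "\<bar>inner v1 (z0 - z1)\<bar> \<le> B * norm (z0 - z1)"
    using Cauchy_Schwarz_ineq2[of v0 "z1 - z0"] Cauchy_Schwarz_ineq2[of v1 "z0 - z1"] B
    by (simp_all add: norm_minus_commute) (meson mult_right_mono norm_ge_zero order_trans)+
  ultimately show ?thesis
    using c0(1) c1(1) by (simp add: abs_le_iff)
qed

lemma has_derivative_lipschitz_on:
  fixes h :: "'a::euclidean_space \<Rightarrow> real"
  assumes S: "convex S" and hd: "\<And>v. v \<in> S \<Longrightarrow> (h has_derivative (\<lambda>w. inner (gradh v) w)) (at v)"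
    and B: "\<And>v. v \<in> S \<Longrightarrow> norm (gradh v) \<le> B" and ab: "a \<in> S" "b \<in> S"
  shows "\<bar>h a - h b\<bar> \<le> B * norm (a - b)"
proof -
  have "norm (h a - h b) \<le> B * norm (a - b)"
  proof (rule differentiable_bound[OF S _ _ ab])
    show "(h has_derivative (\<lambda>w. inner (gradh v) w)) (at v within S)" if "v \<in> S" for v
      using hd[OF that] by (rule has_derivative_at_withinI)
    show "onorm (\<lambda>w. inner (gradh v) w) \<le> B" if "v \<in> S" for v
    proof (rule onorm_le)
      show "norm (inner (gradh v) w) \<le> B * norm w" for w
        using B[OF that] Cauchy_Schwarz_ineq2[of "gradh v" w] mult_right_mono[of "norm (gradh v)" B "norm w"]
        by simp
    qed
  qed
  then show ?thesis
    by simp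
qed

lemma abs_inner_linear_diff_le:
  assumes "linear A"
  shows "\<bar>inner z0 (A x0) - inner z1 (A x1)\<bar> \<le> norm (z0 - z1) * norm (A x0) + norm z1 * norm (A (x0 - x1))"
proof -
  have "inner z0 (A x0) - inner z1 (A x1) = inner (z0 - z1) (A x0) + inner z1 (A (x0 - x1))"
    using linear_diff[OF assms] by (simp add: inner_diff_left inner_diff_right)
  then show ?thesis
    using Cauchy_Schwarz_ineq2[of "z0 - z1" "A x0"] Cauchy_Schwarz_ineq2[of z1 "A (x0 - x1)"] by linarith
qed

locale stabilized_iteration =
  fixes S :: "'n::euclidean_space set"
    and A :: "'n \<Rightarrow> 's::euclidean_space" and K :: "'n \<Rightarrow> 'p::euclidean_space"
    and g :: "'s \<Rightarrow> ereal" and f :: "'p \<Rightarrow> ereal"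
    and h :: "'n \<Rightarrow> real" and gradh :: "'n \<Rightarrow> 'n" and U :: "'n set" and L :: real
    and \<beta> q :: real
    and x u :: "nat \<Rightarrow> 'n" and y :: "nat \<Rightarrow> 'p" and z :: "nat \<Rightarrow> 's"
    and \<theta> \<delta>s \<gamma>s :: "nat \<Rightarrow> real" and j :: "nat \<Rightarrow> nat"
    and \<gamma> \<delta> m Rz :: real and K0 K1 :: nat
  assumes S: "S \<noteq> {}" "convex S" "compact S"
    and lin: "linear A" "linear K"
    and g: "proper_fun g" "convex_fun g" "lsc_fun g" "ess_strictly_convex g"
    and f: "proper_fun f" "convex_fun f" and fdom: "K ` S \<subseteq> interior (edom f)"
    and U: "open U" "S \<subseteq> U"
    and hder: "\<And>v. v \<in> U \<Longrightarrow> (h has_derivative (\<lambda>w. inner (gradh v) w)) (at v)"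
    and hlip: "\<And>v w. v \<in> U \<Longrightarrow> w \<in> U \<Longrightarrow> norm (gradh v - gradh w) \<le> L * norm (v - w)"
    and \<beta>: "0 < \<beta>" "\<beta> < 2" and q: "0 < q" "q < 1"
    and it_y: "\<And>k. y (Suc k) \<in> csubdiff f (K (x k))"
    and it_x: "\<And>k. x (Suc k) = closest_point S (u k + (\<theta> k / \<delta>s k) *\<^sub>R adjoint K (y (Suc k))
                   - (1 / \<delta>s k) *\<^sub>R gradh (x k) - (1 / \<delta>s k) *\<^sub>R adjoint A (z k))"
    and it_u: "\<And>k. u (Suc k) = (1 - \<beta>) *\<^sub>R u k + \<beta> *\<^sub>R x (Suc k)"
    and it_j: "\<And>k. Psi S A g h (x (Suc k))
                      (prox (fconj g) (1 / (\<gamma>s k * q ^ j k)) ((1 / (\<gamma>s k * q ^ j k)) *\<^sub>R A (x (Suc k))))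
                      (u (Suc k)) (\<delta>s k) (\<gamma>s k * q ^ j k) / f (K (x (Suc k))) > 0"
    and it_z: "\<And>k. z (Suc k) = prox (fconj g) (1 / (\<gamma>s k * q ^ j k)) ((1 / (\<gamma>s k * q ^ j k)) *\<^sub>R A (x (Suc k)))"
    and it_theta: "\<And>k. ereal (\<theta> (Suc k)) =
                   Psi S A g h (x (Suc k)) (z (Suc k)) (u (Suc k)) (\<delta>s k) (\<gamma>s k * q ^ j k) / f (K (x (Suc k)))"
    and it_gamma: "\<And>k. \<gamma>s (Suc k) \<in> {\<gamma>s k * q ^ j k, \<gamma>s k * q ^ j k * q}"
    and \<gamma>: "\<gamma> > 0" and \<delta>: "\<delta> > 0"
    and stab: "\<And>k. k \<ge> K0 \<Longrightarrow> \<gamma>s k = \<gamma> \<and> \<delta>s k = \<delta> \<and> norm (z (Suc k)) \<le> Rz"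
    and m: "m > 0" and fKx: "\<And>k. k \<ge> 1 \<Longrightarrow> ereal m < f (K (x k))"
    and K1: "K1 \<ge> K0 + 1"
    and den: "\<And>k. k \<ge> K1 \<Longrightarrow> ereal m \<le> ereal (inner (K (x k)) (y k)) - fconj f (y k)"
begin

definition fval :: "nat \<Rightarrow> real" where
  "fval k = real_of_ereal (f (K (x k)))"

definition psi_at :: "nat \<Rightarrow> real" where
  "psi_at k = psi A g h \<delta> \<gamma> (x k) (z k) (u k)"

definition den_at :: "nat \<Rightarrow> real" where
  "den_at k = fenchel_minorant K f (x k) (y k)"

definition step :: "nat \<Rightarrow> real" where
  "step k = norm (x k - x (Suc k)) + norm (u k - u (Suc k)) + norm (z k - z (Suc k))"

lemma L_nonneg: "0 \<le> L"
  using lipschitz_constant_nonneg[OF U(1) _ hlip] S(1) U(2) by blast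

text \<open>Once \<open>\<gamma>\<^sub>k\<close> has stabilised, the backtracking stops at \<open>j\<^sub>k = 0\<close>: the alternative
  \<open>\<gamma> = \<gamma> q\<^sup>j\<^sup>+\<^sup>1\<close> is impossible for \<open>q < 1\<close>.\<close>

lemma backtracking_trivial:
  assumes "k \<ge> K0"
  shows "\<gamma>s k * q ^ j k = \<gamma>"
proof -
  have g: "\<gamma>s (Suc k) = \<gamma>" "\<gamma>s k = \<gamma>"
    using stab assms by auto
  have "q ^ j k * q \<le> 1 * q"
    using q power_le_one[of q "j k"] by (intro mult_right_mono) auto
  then have "q ^ j k * q < 1"
    using q by linarith
  then show ?thesis
    using it_gamma[of k] g \<gamma> by (auto simp: mult.assoc)
qed

lemma x_in_S: "x (Suc k) \<in> S"
  unfolding it_x using closest_point_in_set[OF compact_imp_closed[OF S(3)] S(1)] .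

lemma f_iterate:
  assumes "k \<ge> 1"
  shows "f (K (x k)) = ereal (fval k)" "m < fval k"
proof -
  have "ereal m < f (K (x k))"
    using fKx[OF assms] .
  moreover have "x k \<in> S"
    using x_in_S[of "k - 1"] assms by simp
  then have "f (K (x k)) < \<infinity>"
    using fdom interior_subset by (auto simp: edom_def)
  ultimately show "f (K (x k)) = ereal (fval k)" "m < fval k"
    unfolding fval_def by (cases "f (K (x k))"; simp)+
qed

lemma z_iterate: "k \<ge> K0 \<Longrightarrow> z (Suc k) = prox (fconj g) (1 / \<gamma>) ((1 / \<gamma>) *\<^sub>R A (x (Suc k)))"
  using it_z backtracking_trivial by simp

lemma Psi_iterate_pos:
  assumes "k \<ge> K0"
  shows "Psi S A g h (x (Suc k)) (z (Suc k)) (u (Suc k)) \<delta> \<gamma> / f (K (x (Suc k))) > 0"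
  using it_j[of k] stab[OF assms]
  unfolding backtracking_trivial[OF assms] z_iterate[OF assms, symmetric] by simp

lemma z_csubdiff:
  assumes "k \<ge> K0"
  shows "A (x (Suc k)) - \<gamma> *\<^sub>R z (Suc k) \<in> csubdiff (fconj g) (z (Suc k))"
proof -
  have "fconj g (z (Suc k)) < \<infinity>"
  proof (rule ccontr)
    assume "\<not> ?thesis"
    then have "Psi S A g h (x (Suc k)) (z (Suc k)) (u (Suc k)) \<delta> \<gamma> = -\<infinity>"
      using x_in_S[of k] by (simp add: Psi_def top.not_eq_extremum)
    then show False
      using Psi_iterate_pos[OF assms] f_iterate[of "Suc k"] m by simp
  qed
  then have "(1 / (1 / \<gamma>)) *\<^sub>R ((1 / \<gamma>) *\<^sub>R A (x (Suc k)) - z (Suc k)) \<in> csubdiff (fconj g) (z (Suc k))"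
    using prox_fconj_csubdiff[OF g(1), of "1 / \<gamma>"] \<gamma> unfolding z_iterate[OF assms] by simp
  then show ?thesis
    using \<gamma> by (simp add: scaleR_diff_right)
qed

lemma psi_iterate:
  assumes "k \<ge> K0"
  shows "Psi S A g h (x (Suc k)) (z (Suc k)) (u (Suc k)) \<delta> \<gamma> = ereal (psi_at (Suc k))"
  using z_csubdiff[OF assms] x_in_S[of k] unfolding psi_at_def
  by (auto simp: in_csubdiff_iff Psi_eq_psi elim: in_csubdiff_realE)

lemma psi_at_pos:
  assumes "k \<ge> K0"
  shows "0 < psi_at (Suc k)"
proof -
  have "0 < ereal (psi_at (Suc k)) / ereal (fval (Suc k))"
    using Psi_iterate_pos[OF assms] psi_iterate[OF assms] f_iterate(1)[of "Suc k"] by simp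
  moreover have "0 < fval (Suc k)"
    using f_iterate(2)[of "Suc k"] m by simp
  ultimately show ?thesis
    by (simp add: zero_less_divide_iff)
qed

lemma theta_iterate:
  assumes "k \<ge> K0 + 1"
  shows "\<theta> k = psi_at k / fval k"
proof -
  obtain k' where k: "k = Suc k'" "k' \<ge> K0"
    using assms by (cases k) auto
  have "ereal (\<theta> k) = ereal (psi_at k) / ereal (fval k)"
    using it_theta[of k'] psi_iterate[OF k(2)] f_iterate(1)[of k] stab[OF k(2)]
    unfolding backtracking_trivial[OF k(2)] k(1) by simp
  then show ?thesis
    using f_iterate(2)[of k] m k by simp
qed

lemma y_iterate:
  "K (x k) \<in> csubdiff (fconj f) (y (Suc k))"
  "k \<ge> 1 \<Longrightarrow> den_at (Suc k) - fval k = inner (K (x (Suc k)) - K (x k)) (y (Suc k))"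
proof -
  show "K (x k) \<in> csubdiff (fconj f) (y (Suc k))"
    using csubdiff_fconj_fenchel_young_eq(2)[OF it_y] .
  assume "k \<ge> 1"
  then show "den_at (Suc k) - fval k = inner (K (x (Suc k)) - K (x k)) (y (Suc k))"
    using csubdiff_fconj_fenchel_young_eq(1)[OF it_y[of k]] f_iterate(1)
    unfolding den_at_def fenchel_minorant_def by (simp add: inner_diff_left)
qed

lemma S_bounded:
  obtains Rx where "0 \<le> Rx" "\<And>v. v \<in> S \<Longrightarrow> norm v \<le> Rx"
proof -
  obtain Rx where "\<And>v. v \<in> S \<Longrightarrow> norm v \<le> Rx"
    using compact_imp_bounded[OF S(3)] unfolding bounded_iff by blast
  moreover have "0 \<le> Rx"
    using S(1) calculation by (metis all_not_in_conv norm_ge_zero order_trans)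
  ultimately show ?thesis
    using that by blast
qed

text \<open>The averaging step is a contraction with factor \<open>\<bar>1 - \<beta>\<bar> < 1\<close> towards points of \<open>S\<close>.\<close>

lemma u_bounded:
  obtains Ru where "\<And>k. norm (u k) \<le> Ru"
proof -
  obtain Rx where Rx: "0 \<le> Rx" "\<And>v. v \<in> S \<Longrightarrow> norm v \<le> Rx"
    using S_bounded by blast
  define c where "c = \<bar>1 - \<beta>\<bar>"
  have c: "0 \<le> c" "c < 1"
    unfolding c_def using \<beta> by auto
  define Ru where "Ru = max (norm (u 0)) (\<beta> * Rx / (1 - c))"
  have "norm (u k) \<le> Ru" for k
  proof (induction k)
    case (Suc k)
    have "norm (u (Suc k)) \<le> c * norm (u k) + \<beta> * norm (x (Suc k))"
      using it_u[of k] norm_triangle_ineq[of "(1 - \<beta>) *\<^sub>R u k" "\<beta> *\<^sub>R x (Suc k)"] \<beta> unfolding c_def by simp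
    also have "\<dots> \<le> c * Ru + \<beta> * Rx"
      using Suc c Rx(2)[OF x_in_S] \<beta> by (intro add_mono mult_left_mono) auto
    also have "\<dots> \<le> Ru"
    proof -
      have "\<beta> * Rx / (1 - c) \<le> Ru"
        unfolding Ru_def by simp
      then show ?thesis
        using c by (simp add: pos_divide_le_eq algebra_simps)
    qed
    finally show ?case .
  qed (simp add: Ru_def)
  then show ?thesis
    using that by blast
qed

lemma y_bounded:
  obtains Ry where "\<And>k. k \<ge> 1 \<Longrightarrow> norm (y (Suc k)) \<le> Ry"
proof -
  have "compact (K ` S)"
    using compact_continuous_image[OF linear_continuous_on[OF linear_conv_bounded_linear[THEN iffD1, OF lin(2)]] S(3)] .
  then obtain Ry where Ry: "\<And>c v. c \<in> K ` S \<Longrightarrow> v \<in> csubdiff f c \<Longrightarrow> norm v \<le> Ry"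
    using csubdiff_bounded_on_compact[OF f _ fdom] by blast
  have "norm (y (Suc k)) \<le> Ry" if "k \<ge> 1" for k
    using Ry[OF _ it_y[of k]] x_in_S[of "k - 1"] that by simp
  then show ?thesis
    using that by blast
qed

lemma h_lipschitz_on_S:
  obtains Bg where "0 \<le> Bg" "\<And>a b. a \<in> S \<Longrightarrow> b \<in> S \<Longrightarrow> \<bar>h a - h b\<bar> \<le> Bg * norm (a - b)"
proof -
  obtain Rx where Rx: "0 \<le> Rx" "\<And>v. v \<in> S \<Longrightarrow> norm v \<le> Rx"
    using S_bounded by blast
  obtain s0 where s0: "s0 \<in> S"
    using S(1) by blast
  define Bg where "Bg = norm (gradh s0) + L * (2 * Rx)"
  have gradh_bound: "norm (gradh v) \<le> Bg" if "v \<in> S" for v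
  proof -
    have "norm (gradh v - gradh s0) \<le> L * norm (v - s0)"
      using hlip that s0 U(2) by blast
    also have "\<dots> \<le> L * (2 * Rx)"
      using Rx(2)[OF that] Rx(2)[OF s0] norm_triangle_ineq4[of v s0] L_nonneg by (intro mult_left_mono) auto
    finally show ?thesis
      unfolding Bg_def using norm_triangle_sub[of "gradh v" "gradh s0"] by linarith
  qed
  have hS: "(h has_derivative (\<lambda>w. inner (gradh v) w)) (at v)" if "v \<in> S" for v
    using hder U(2) that by blast
  have "0 \<le> Bg"
    unfolding Bg_def using L_nonneg Rx(1) by simp
  moreover have "\<bar>h a - h b\<bar> \<le> Bg * norm (a - b)" if "a \<in> S" "b \<in> S" for a b
    using has_derivative_lipschitz_on[where gradh = gradh and B = Bg, OF S(2) hS gradh_bound that] .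
  ultimately show ?thesis
    using that by blast
qed

lemma h_bounded_on_S:
  obtains Bh where "\<And>v. v \<in> S \<Longrightarrow> \<bar>h v\<bar> \<le> Bh"
proof -
  obtain Rx where Rx: "0 \<le> Rx" "\<And>v. v \<in> S \<Longrightarrow> norm v \<le> Rx"
    using S_bounded by blast
  obtain Bg where Bg: "0 \<le> Bg" "\<And>a b. a \<in> S \<Longrightarrow> b \<in> S \<Longrightarrow> \<bar>h a - h b\<bar> \<le> Bg * norm (a - b)"
    using h_lipschitz_on_S by blast
  obtain s0 where s0: "s0 \<in> S"
    using S(1) by blast
  have "\<bar>h v\<bar> \<le> \<bar>h s0\<bar> + Bg * (2 * Rx)" if "v \<in> S" for v
  proof -
    have "Bg * norm (v - s0) \<le> Bg * (2 * Rx)"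
      using Rx(2)[OF that] Rx(2)[OF s0] norm_triangle_ineq4[of v s0] Bg(1) by (intro mult_left_mono) auto
    then show ?thesis
      using Bg(2)[OF that s0] by linarith
  qed
  then show ?thesis
    using that by blast
qed

lemma psi_at_bounded:
  obtains B\<psi> where "\<And>k. k \<ge> K0 + 1 \<Longrightarrow> psi_at k \<le> B\<psi>"
proof -
  obtain Rx where Rx: "0 \<le> Rx" "\<And>v. v \<in> S \<Longrightarrow> norm v \<le> Rx"
    using S_bounded by blast
  obtain Ru where Ru: "\<And>k. norm (u k) \<le> Ru"
    using u_bounded by blast
  obtain Bh where Bh: "\<And>v. v \<in> S \<Longrightarrow> \<bar>h v\<bar> \<le> Bh"
    using h_bounded_on_S by blast
  obtain BA where BA: "BA > 0" "\<And>v. norm (A v) \<le> BA * norm v"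
    using linear_bounded_pos[OF lin(1)] by blast
  obtain w0 c0 where low: "\<And>v. ereal (inner w0 v - c0) \<le> fconj g v"
    using fconj_affine_minorant[OF g(1)] by blast
  define B\<psi> where "B\<psi> = Rz * (BA * Rx) + Bh + \<delta> / 2 * (Rx + Ru)\<^sup>2 + norm w0 * Rz + c0"
  have "psi_at k \<le> B\<psi>" if k: "k \<ge> K0 + 1" for k
  proof -
    obtain k' where k': "k = Suc k'" "k' \<ge> K0"
      using k by (cases k) auto
    have xS: "x k \<in> S" and nz: "norm (z k) \<le> Rz"
      using x_in_S[of k'] stab[OF k'(2)] unfolding k'(1) by auto
    have "norm (A (x k)) \<le> BA * Rx"
      using BA(2)[of "x k"] Rx(2)[OF xS] BA(1) by (smt (verit) mult_left_mono)
    then have "inner (z k) (A (x k)) \<le> Rz * (BA * Rx)"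
      using Cauchy_Schwarz_ineq2[of "z k" "A (x k)"] nz by (smt (verit) mult_mono norm_ge_zero)
    moreover have "\<delta> / 2 * (norm (x k - u k))\<^sup>2 \<le> \<delta> / 2 * (Rx + Ru)\<^sup>2"
      using norm_triangle_ineq4[of "x k" "u k"] Rx(2)[OF xS] Ru[of k] \<delta>
      by (intro mult_left_mono power_mono) auto
    moreover have "inner w0 (z k) - c0 \<le> real_of_ereal (fconj g (z k))"
      using low[of "z k"] z_csubdiff[OF k'(2)] unfolding k'(1)
      by (auto elim!: in_csubdiff_realE)
    moreover have "- (norm w0 * Rz) \<le> inner w0 (z k)"
      using Cauchy_Schwarz_ineq2[of w0 "z k"] nz by (smt (verit) mult_left_mono norm_ge_zero)
    moreover have "0 \<le> \<gamma> / 2 * (norm (z k))\<^sup>2"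
      using \<gamma> by simp
    ultimately show ?thesis
      unfolding psi_at_def psi_def B\<psi>_def using Bh[OF xS] by linarith
  qed
  then show ?thesis
    using that by blast
qed

definition step_bounded :: "(nat \<Rightarrow> real) \<Rightarrow> bool" where
  "step_bounded X \<longleftrightarrow> (\<exists>C. \<forall>k\<ge>K1. X k \<le> C * step k)"

lemma Rz_nonneg: "0 \<le> Rz"
  using stab[of K0] norm_ge_zero order_trans by blast

lemma step_nonneg: "0 \<le> step k"
  unfolding step_def by simp

lemma step_bounded_x_diff: "step_bounded (\<lambda>k. norm (x k - x (Suc k)))"
  unfolding step_bounded_def step_def by (auto intro!: exI[of _ 1])

lemma step_bounded_add:
  assumes "step_bounded X" "step_bounded Y"
  shows "step_bounded (\<lambda>k. X k + Y k)"
proof -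
  obtain C D where "\<forall>k\<ge>K1. X k \<le> C * step k" "\<forall>k\<ge>K1. Y k \<le> D * step k"
    using assms unfolding step_bounded_def by blast
  then have "\<forall>k\<ge>K1. X k + Y k \<le> (C + D) * step k"
    by (simp add: distrib_right add_mono)
  then show ?thesis
    unfolding step_bounded_def by blast
qed

lemma step_bounded_mult:
  assumes c: "\<And>k. k \<ge> K1 \<Longrightarrow> \<bar>c k\<bar> \<le> B" and X0: "\<And>k. k \<ge> K1 \<Longrightarrow> 0 \<le> X k"
    and X: "step_bounded X"
  shows "step_bounded (\<lambda>k. c k * X k)"
proof -
  obtain C where C: "\<forall>k\<ge>K1. X k \<le> C * step k"
    using X unfolding step_bounded_def by blast
  have "c k * X k \<le> (B * \<bar>C\<bar>) * step k" if "k \<ge> K1" for k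
  proof -
    have "c k * X k \<le> B * X k"
      using c[OF that] X0[OF that] by (smt (verit) abs_ge_self mult_right_mono)
    also have "\<dots> \<le> B * (\<bar>C\<bar> * step k)"
    proof (rule mult_left_mono)
      show "X k \<le> \<bar>C\<bar> * step k"
        using C that mult_right_mono[OF abs_ge_self step_nonneg, of C k] by auto
      show "0 \<le> B"
        using c[OF that] by linarith
    qed
    finally show ?thesis
      by simp
  qed
  then show ?thesis
    unfolding step_bounded_def by blast
qed

lemma step_bounded_mono:
  assumes "\<And>k. k \<ge> K1 \<Longrightarrow> X k \<le> Y k" "step_bounded Y"
  shows "step_bounded X"
  using assms unfolding step_bounded_def by (meson order_trans)

lemma step_bounded_linear:
  assumes "0 \<le> Ca" "0 \<le> Cb" "0 \<le> Cc"
    and "\<And>k. k \<ge> K1 \<Longrightarrow> X k \<le> Ca * norm (x k - x (Suc k)) + Cb * norm (u k - u (Suc k))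
                                + Cc * norm (z k - z (Suc k))"
  shows "step_bounded X"
proof -
  have "X k \<le> (Ca + Cb + Cc) * step k" if "k \<ge> K1" for k
  proof -
    have "Ca * norm (x k - x (Suc k)) \<le> Ca * step k" "Cb * norm (u k - u (Suc k)) \<le> Cb * step k"
      "Cc * norm (z k - z (Suc k)) \<le> Cc * step k"
      using assms(1-3) unfolding step_def by (simp_all add: mult_left_mono)
    then show ?thesis
      using assms(4)[OF that] by (simp add: distrib_right)
  qed
  then show ?thesis
    unfolding step_bounded_def by blast
qed

lemma iterate_index:
  assumes "k \<ge> K1"
  obtains k' where "k = Suc k'" "k' \<ge> K0" "k \<ge> K0" "k \<ge> 1"
  using assms K1 by (cases k) auto

lemma psi_step_bounded: "step_bounded (\<lambda>k. \<bar>psi_at k - psi_at (Suc k)\<bar>)"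
proof -
  obtain Rx where Rx: "0 \<le> Rx" "\<And>v. v \<in> S \<Longrightarrow> norm v \<le> Rx"
    using S_bounded by blast
  obtain Ru where Ru: "\<And>k. norm (u k) \<le> Ru"
    using u_bounded by blast
  obtain Bg where Bg: "0 \<le> Bg" "\<And>a b. a \<in> S \<Longrightarrow> b \<in> S \<Longrightarrow> \<bar>h a - h b\<bar> \<le> Bg * norm (a - b)"
    using h_lipschitz_on_S by blast
  obtain BA where BA: "BA > 0" "\<And>v. norm (A v) \<le> BA * norm v"
    using linear_bounded_pos[OF lin(1)] by blast
  have Ru0: "0 \<le> Ru"
    using Ru[of 0] norm_ge_zero order_trans by blast
  define Bv where "Bv = BA * Rx + \<gamma> * Rz"
  show ?thesis
  proof (rule step_bounded_linear)
    fix k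
    assume "k \<ge> K1"
    then obtain k' where k: "k = Suc k'" "k' \<ge> K0" "k \<ge> K0"
      by (rule iterate_index)
    define a b c where "a = norm (x k - x (Suc k))" and "b = norm (u k - u (Suc k))"
      and "c = norm (z k - z (Suc k))"
    have xS: "x k \<in> S" "x (Suc k) \<in> S"
      using x_in_S[of k'] x_in_S[of k] k(1) by simp_all
    have nz: "norm (z k) \<le> Rz" "norm (z (Suc k)) \<le> Rz"
      using stab[OF k(2)] stab[OF k(3)] k(1) by simp_all
    have nA: "norm (A (x i)) \<le> BA * Rx" if "x i \<in> S" for i
      using BA(2)[of "x i"] mult_left_mono[OF Rx(2)[OF that], of BA] BA(1) by linarith
    have "norm (z (Suc k)) * norm (A (x k - x (Suc k))) \<le> Rz * (BA * a)"
      using nz(2) BA(2)[of "x k - x (Suc k)"] BA(1) Rz_nonneg unfolding a_def by (intro mult_mono) auto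
    then have t1: "\<bar>inner (z k) (A (x k)) - inner (z (Suc k)) (A (x (Suc k)))\<bar> \<le> BA * Rx * c + Rz * BA * a"
      using abs_inner_linear_diff_le[OF lin(1), of "z k" "x k" "z (Suc k)" "x (Suc k)"]
        mult_left_mono[OF nA[OF xS(1)], of c] unfolding c_def by (simp add: algebra_simps)
    have t2: "\<bar>h (x k) - h (x (Suc k))\<bar> \<le> Bg * a"
      unfolding a_def by (rule Bg(2)[OF xS])
    have t3: "\<bar>(norm (x k - u k))\<^sup>2 - (norm (x (Suc k) - u (Suc k)))\<^sup>2\<bar> \<le> (a + b) * (2 * (Rx + Ru))"
    proof -
      have "(x k - u k) - (x (Suc k) - u (Suc k)) = (x k - x (Suc k)) - (u k - u (Suc k))"
        by simp
      then have "norm ((x k - u k) - (x (Suc k) - u (Suc k))) \<le> a + b"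
        unfolding a_def b_def by (metis norm_triangle_ineq4)
      moreover have "norm (x k - u k) + norm (x (Suc k) - u (Suc k)) \<le> 2 * (Rx + Ru)"
        using norm_triangle_ineq4[of "x k" "u k"] norm_triangle_ineq4[of "x (Suc k)" "u (Suc k)"]
          Rx(2)[OF xS(1)] Rx(2)[OF xS(2)] Ru[of k] Ru[of "Suc k"] unfolding distrib_left by linarith
      ultimately show ?thesis
        using abs_norm_sq_diff_le[of "x k - u k" "x (Suc k) - u (Suc k)"] mult_mono[of _ "a + b" _ "2 * (Rx + Ru)"]
        by (meson add_nonneg_nonneg norm_ge_zero order_trans)
    qed
    have t4: "\<bar>(norm (z k))\<^sup>2 - (norm (z (Suc k)))\<^sup>2\<bar> \<le> c * (2 * Rz)"
      using abs_norm_sq_diff_le[of "z k" "z (Suc k)"] mult_left_mono[of "norm (z k) + norm (z (Suc k))" "2 * Rz" c] nz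
      unfolding c_def by simp
    have t5: "\<bar>real_of_ereal (fconj g (z k)) - real_of_ereal (fconj g (z (Suc k)))\<bar> \<le> Bv * c"
    proof -
      have "norm (A (x i) - \<gamma> *\<^sub>R z i) \<le> Bv" if "x i \<in> S" "norm (z i) \<le> Rz" for i
      proof -
        have "norm (\<gamma> *\<^sub>R z i) \<le> \<gamma> * Rz"
          using mult_left_mono[OF that(2), of \<gamma>] \<gamma> by simp
        then show ?thesis
          using norm_triangle_ineq4[of "A (x i)" "\<gamma> *\<^sub>R z i"] nA[OF that(1)] unfolding Bv_def by linarith
      qed
      then show ?thesis
        using csubdiff_value_diff_le[OF z_csubdiff[OF k(2)] z_csubdiff[OF k(3)]] xS nz unfolding k(1) c_def
        by (simp add: mult.commute)
    qed
    have "\<bar>\<delta> / 2 * ((norm (x k - u k))\<^sup>2 - (norm (x (Suc k) - u (Suc k)))\<^sup>2)\<bar>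
        = \<delta> / 2 * \<bar>(norm (x k - u k))\<^sup>2 - (norm (x (Suc k) - u (Suc k)))\<^sup>2\<bar>"
      using \<delta> by (simp add: abs_mult)
    also have "\<dots> \<le> \<delta> / 2 * ((a + b) * (2 * (Rx + Ru)))"
      using \<delta> by (intro mult_left_mono[OF t3]) simp
    finally have t3': "\<bar>\<delta> / 2 * ((norm (x k - u k))\<^sup>2 - (norm (x (Suc k) - u (Suc k)))\<^sup>2)\<bar>
        \<le> \<delta> * (Rx + Ru) * (a + b)"
      by (simp add: algebra_simps)
    have "\<bar>\<gamma> / 2 * ((norm (z k))\<^sup>2 - (norm (z (Suc k)))\<^sup>2)\<bar> = \<gamma> / 2 * \<bar>(norm (z k))\<^sup>2 - (norm (z (Suc k)))\<^sup>2\<bar>"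
      using \<gamma> by (simp add: abs_mult)
    also have "\<dots> \<le> \<gamma> / 2 * (c * (2 * Rz))"
      using \<gamma> by (intro mult_left_mono[OF t4]) simp
    finally have t4': "\<bar>\<gamma> / 2 * ((norm (z k))\<^sup>2 - (norm (z (Suc k)))\<^sup>2)\<bar> \<le> \<gamma> * Rz * c"
      by (simp add: algebra_simps)
    have eq: "psi_at k - psi_at (Suc k) = (inner (z k) (A (x k)) - inner (z (Suc k)) (A (x (Suc k))))
        + (h (x k) - h (x (Suc k))) + \<delta> / 2 * ((norm (x k - u k))\<^sup>2 - (norm (x (Suc k) - u (Suc k)))\<^sup>2)
        - \<gamma> / 2 * ((norm (z k))\<^sup>2 - (norm (z (Suc k)))\<^sup>2)
        - (real_of_ereal (fconj g (z k)) - real_of_ereal (fconj g (z (Suc k))))"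
      unfolding psi_at_def psi_def by (simp add: algebra_simps)
    show "\<bar>psi_at k - psi_at (Suc k)\<bar> \<le> (Rz * BA + Bg + \<delta> * (Rx + Ru)) * a + (\<delta> * (Rx + Ru)) * b
        + (BA * Rx + \<gamma> * Rz + Bv) * c"
      using t1 t2 t3' t4' t5 unfolding eq abs_le_iff by (simp add: algebra_simps)
  qed (use Rx(1) Ru0 BA(1) Bg(1) \<gamma> \<delta> Rz_nonneg in \<open>auto simp: Bv_def\<close>)
qed

definition ratio :: "nat \<Rightarrow> real" where
  "ratio k = psi_at k / den_at k"

lemma den_at_ge:
  assumes "k \<ge> K1"
  shows "m \<le> den_at k"
proof -
  obtain k' where k: "k = Suc k'"
    using assms by (rule iterate_index)
  obtain c where "fconj f (y k) = ereal c"
    using y_iterate(1)[of k'] unfolding k by (auto elim: in_csubdiff_realE)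
  then show ?thesis
    using den[OF assms] unfolding den_at_def fenchel_minorant_def by simp
qed

lemma ratio_bounds:
  assumes "k \<ge> K1" and B\<psi>: "\<And>k. k \<ge> K0 + 1 \<Longrightarrow> psi_at k \<le> B\<psi>"
  shows "0 < ratio (Suc k)" "ratio (Suc k) \<le> B\<psi> / m"
proof -
  have k: "k \<ge> K0" "Suc k \<ge> K1" "Suc k \<ge> K0 + 1"
    using assms(1) K1 by auto
  show "0 < ratio (Suc k)"
    unfolding ratio_def using psi_at_pos[OF k(1)] den_at_ge[OF k(2)] m by simp
  show "ratio (Suc k) \<le> B\<psi> / m"
    unfolding ratio_def using psi_at_pos[OF k(1)] den_at_ge[OF k(2)] m B\<psi>[OF k(3)]
    by (intro frac_le) auto
qed

lemma theta_step_bounded: "step_bounded (\<lambda>k. \<bar>\<theta> k - ratio (Suc k)\<bar>)"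
proof -
  obtain B\<psi> where B\<psi>: "\<And>k. k \<ge> K0 + 1 \<Longrightarrow> psi_at k \<le> B\<psi>"
    using psi_at_bounded by blast
  obtain Ry where Ry: "\<And>k. k \<ge> 1 \<Longrightarrow> norm (y (Suc k)) \<le> Ry"
    using y_bounded by blast
  obtain BK where BK: "BK > 0" "\<And>v. norm (K v) \<le> BK * norm v"
    using linear_bounded_pos[OF lin(2)] by blast
  define C where "C = B\<psi> * BK * Ry / (m * m)"
  have "\<bar>\<theta> k - ratio (Suc k)\<bar> \<le> 1 / m * \<bar>psi_at k - psi_at (Suc k)\<bar> + C * norm (x k - x (Suc k))"
    if k: "k \<ge> K1" for k
  proof -
    have k': "k \<ge> K0 + 1" "k \<ge> K0" "k \<ge> 1" "Suc k \<ge> K1"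
      using k K1 by auto
    define F D1 where "F = fval k" and "D1 = den_at (Suc k)"
    have F: "m < F" and D1: "m \<le> D1"
      unfolding F_def D1_def using f_iterate(2)[OF k'(3)] den_at_ge[OF k'(4)] by auto
    have \<psi>1: "0 < psi_at (Suc k)" "psi_at (Suc k) \<le> B\<psi>"
      using psi_at_pos[OF k'(2)] B\<psi>[of "Suc k"] k'(1) by auto
    have "\<bar>D1 - F\<bar> \<le> BK * norm (x k - x (Suc k)) * Ry"
    proof -
      have "\<bar>D1 - F\<bar> \<le> norm (K (x (Suc k)) - K (x k)) * norm (y (Suc k))"
        unfolding D1_def F_def y_iterate(2)[OF k'(3)] by (rule Cauchy_Schwarz_ineq2)
      also have "\<dots> \<le> BK * norm (x k - x (Suc k)) * Ry"
        using BK(2)[of "x (Suc k) - x k"] Ry[OF k'(3)] BK(1) linear_diff[OF lin(2)]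
        by (intro mult_mono) (auto simp: norm_minus_commute)
      finally show ?thesis .
    qed
    have eq: "\<theta> k - ratio (Suc k) = (psi_at k - psi_at (Suc k)) / F + psi_at (Suc k) * (D1 - F) / (F * D1)"
      unfolding theta_iterate[OF k'(1)] ratio_def F_def[symmetric] D1_def[symmetric]
      using F D1 m by (simp add: field_simps)
    have b1: "\<bar>(psi_at k - psi_at (Suc k)) / F\<bar> \<le> 1 / m * \<bar>psi_at k - psi_at (Suc k)\<bar>"
      using F m by (simp add: abs_divide frac_le)
    have b2: "\<bar>psi_at (Suc k) * (D1 - F) / (F * D1)\<bar> \<le> C * norm (x k - x (Suc k))"
    proof -
      have "\<bar>psi_at (Suc k) * (D1 - F)\<bar> \<le> B\<psi> * (BK * norm (x k - x (Suc k)) * Ry)"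
        unfolding abs_mult using \<psi>1 \<open>\<bar>D1 - F\<bar> \<le> _\<close> by (intro mult_mono) auto
      moreover have "m * m \<le> \<bar>F * D1\<bar>"
        using F D1 m by (simp add: abs_mult mult_mono)
      ultimately show ?thesis
        unfolding C_def abs_divide using m by (simp add: frac_le algebra_simps)
    qed
    show ?thesis
      unfolding eq by (rule order_trans[OF abs_triangle_ineq add_mono[OF b1 b2]])
  qed
  moreover have "step_bounded (\<lambda>k. 1 / m * \<bar>psi_at k - psi_at (Suc k)\<bar> + C * norm (x k - x (Suc k)))"
    by (intro step_bounded_add step_bounded_mult[OF _ _ psi_step_bounded]
        step_bounded_mult[OF _ _ step_bounded_x_diff]) auto
  ultimately show ?thesis
    by (rule step_bounded_mono)
qed

definition subgrad_at :: "nat \<Rightarrow> 'n \<times> 'p \<times> 's \<times> 'n" where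
  "subgrad_at k = (1 / den_at (Suc k)) *\<^sub>R
     (adjoint A (z (Suc k) - z k) + (gradh (x (Suc k)) - gradh (x k)) + \<delta> *\<^sub>R (u k - u (Suc k))
        + (\<theta> k - ratio (Suc k)) *\<^sub>R adjoint K (y (Suc k)),
      - ratio (Suc k) *\<^sub>R (K (x (Suc k)) - K (x k)), 0, - \<delta> *\<^sub>R (x (Suc k) - u (Suc k)))"

text \<open>The projection step makes \<open>\<delta> (p\<^sub>k - x\<^sub>k\<^sub>+\<^sub>1)\<close> a normal vector to \<open>S\<close> at \<open>x\<^sub>k\<^sub>+\<^sub>1\<close>; substituting it
  into the Frechet subgradient of \<open>\<Gamma>\<close> leaves only differences of consecutive iterates.\<close>

lemma subgrad_at_fsubdiff:
  assumes "k \<ge> K1"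
  shows "subgrad_at k \<in> fsubdiff (Gamma S A K g f h \<delta> \<gamma> m) (x (Suc k), y (Suc k), z (Suc k), u (Suc k))"
proof -
  have k: "k \<ge> K0" "k \<ge> 1" "Suc k \<ge> K1"
    using assms K1 by auto
  define p where "p = u k + (\<theta> k / \<delta>) *\<^sub>R adjoint K (y (Suc k)) - (1 / \<delta>) *\<^sub>R gradh (x k)
      - (1 / \<delta>) *\<^sub>R adjoint A (z k)"
  have x1: "x (Suc k) = closest_point S p"
    unfolding p_def it_x using stab[OF k(1)] by simp
  have N: "inner (\<delta> *\<^sub>R (p - x (Suc k))) (v - x (Suc k)) \<le> 0" if "v \<in> S" for v
    using closest_point_normal[OF compact_imp_closed[OF S(3)] S(2,1) that, of p] \<delta>
    unfolding x1[symmetric] by (simp add: mult_nonneg_nonpos)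
  have "m / 2 < fenchel_minorant K f (x (Suc k)) (y (Suc k))"
    using den_at_ge[OF k(3)] m unfolding den_at_def by simp
  from Gamma_fsubdiff[where x = "x k" and x' = "x (Suc k)" and y' = "y (Suc k)" and z' = "z (Suc k)"
      and u' = "u (Suc k)" and gradh = gradh,
      OF lin g f(1) x_in_S N hder[OF subsetD[OF U(2) x_in_S]] y_iterate(1)
      z_csubdiff[OF k(1)] m this psi_at_pos[OF k(1), unfolded psi_at_def]]
  show ?thesis
    unfolding subgrad_at_def ratio_def den_at_def psi_at_def p_def using \<delta>
    by (simp add: algebra_simps linear_diff[OF adjoint_linear[OF lin(1)]])
qed

lemma averaging_gap: "norm (x (Suc k) - u (Suc k)) = \<bar>1 - \<beta>\<bar> / \<beta> * norm (u k - u (Suc k))"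
proof -
  have "\<beta> *\<^sub>R (x (Suc k) - u (Suc k)) = (1 - \<beta>) *\<^sub>R (u (Suc k) - u k)"
    using it_u[of k] by (simp add: algebra_simps)
  then have "\<beta> * norm (x (Suc k) - u (Suc k)) = \<bar>1 - \<beta>\<bar> * norm (u k - u (Suc k))"
    using \<beta>(1) by (metis abs_of_pos norm_minus_commute norm_scaleR)
  then show ?thesis
    using \<beta>(1) by (simp add: field_simps)
qed

lemma subgrad_at_norm_le:
  assumes k: "k \<ge> K1" and B\<psi>: "\<And>k. k \<ge> K0 + 1 \<Longrightarrow> psi_at k \<le> B\<psi>" "0 \<le> B\<psi>"
    and Ry: "\<And>k. k \<ge> 1 \<Longrightarrow> norm (y (Suc k)) \<le> Ry" and BK: "\<And>v. norm (K v) \<le> BK * norm v"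
    and BA': "\<And>v. norm (adjoint A v) \<le> BA' * norm v"
    and BK': "\<And>v. norm (adjoint K v) \<le> BK' * norm v" "0 < BK'"
  shows "norm (subgrad_at k) \<le> (L + B\<psi> / m * BK) / m * norm (x k - x (Suc k))
      + (\<delta> + \<delta> * (\<bar>1 - \<beta>\<bar> / \<beta>)) / m * norm (u k - u (Suc k)) + BA' / m * norm (z k - z (Suc k))
      + BK' * Ry / m * \<bar>\<theta> k - ratio (Suc k)\<bar>"
proof -
  have k': "k \<ge> 1" "Suc k \<ge> K1"
    using k K1 by auto
  define a b d c where "a = norm (x k - x (Suc k))" and "b = norm (u k - u (Suc k))"
    and "d = norm (z k - z (Suc k))" and "c = \<bar>1 - \<beta>\<bar> / \<beta>"
  define v1 v2 v3 v4 where "v1 = adjoint A (z (Suc k) - z k)" and "v2 = gradh (x (Suc k)) - gradh (x k)"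
    and "v3 = \<delta> *\<^sub>R (u k - u (Suc k))" and "v4 = (\<theta> k - ratio (Suc k)) *\<^sub>R adjoint K (y (Suc k))"
  define vy vu where "vy = - ratio (Suc k) *\<^sub>R (K (x (Suc k)) - K (x k))"
    and "vu = - \<delta> *\<^sub>R (x (Suc k) - u (Suc k))"
  have "norm v1 \<le> BA' * d"
    unfolding v1_def d_def using BA'[of "z (Suc k) - z k"] by (simp add: norm_minus_commute)
  moreover have "norm v2 \<le> L * a"
    unfolding v2_def a_def using hlip[of "x (Suc k)" "x k"] x_in_S[of k] x_in_S[of "k - 1"] k' U(2)
    by (auto simp: norm_minus_commute)
  moreover have "norm v3 = \<delta> * b"
    unfolding v3_def b_def using \<delta> by simp
  moreover have "norm v4 \<le> BK' * Ry * \<bar>\<theta> k - ratio (Suc k)\<bar>"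
  proof -
    have "norm (adjoint K (y (Suc k))) \<le> BK' * Ry"
      using BK'(2) BK'(1)[of "y (Suc k)"] mult_left_mono[OF Ry[OF k'(1)], of BK'] by linarith
    then show ?thesis
      unfolding v4_def by (simp add: mult_right_mono mult.commute)
  qed
  moreover have "norm vy \<le> B\<psi> / m * BK * a"
  proof -
    have "norm vy = ratio (Suc k) * norm (K (x k - x (Suc k)))"
      unfolding vy_def using ratio_bounds(1)[OF k B\<psi>(1)] linear_diff[OF lin(2)] by (simp add: norm_minus_commute)
    also have "\<dots> \<le> B\<psi> / m * (BK * a)"
      unfolding a_def using ratio_bounds[OF k B\<psi>(1)] BK B\<psi>(2) m by (intro mult_mono) auto
    finally show ?thesis
      by simp
  qed
  moreover have "norm vu = \<delta> * c * b"
    unfolding vu_def c_def b_def using averaging_gap[of k] \<delta> by simp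
  moreover have "norm (v1 + v2 + v3 + v4) \<le> norm v1 + norm v2 + norm v3 + norm v4"
    by (meson add_mono_thms_linordered_semiring(3) norm_triangle_le norm_triangle_ineq)
  moreover have "norm (subgrad_at k) \<le> (norm (v1 + v2 + v3 + v4) + norm vy + norm vu) / m"
  proof -
    have "norm (v1 + v2 + v3 + v4, vy, 0::'s, vu) \<le> norm (v1 + v2 + v3 + v4) + norm vy + norm vu"
      using norm_Pair_le[of "v1 + v2 + v3 + v4" "(vy, 0::'s, vu)"] norm_Pair_le[of vy "(0::'s, vu)"]
        norm_Pair_le[of "0::'s" vu] by simp
    moreover have "norm (subgrad_at k) = norm (v1 + v2 + v3 + v4, vy, 0::'s, vu) / den_at (Suc k)"
      unfolding subgrad_at_def v1_def v2_def v3_def v4_def vy_def vu_def norm_scaleR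
      using den_at_ge[OF k'(2)] m by simp
    ultimately show ?thesis
      using den_at_ge[OF k'(2)] m by (simp add: frac_le)
  qed
  ultimately have "norm (subgrad_at k) \<le> (BA' * d + L * a + \<delta> * b + BK' * Ry * \<bar>\<theta> k - ratio (Suc k)\<bar>
      + B\<psi> / m * BK * a + \<delta> * c * b) / m"
    using m by (smt (verit) divide_right_mono)
  also have "\<dots> = (L + B\<psi> / m * BK) / m * a + (\<delta> + \<delta> * c) / m * b + BA' / m * d
      + BK' * Ry / m * \<bar>\<theta> k - ratio (Suc k)\<bar>"
    by (simp add: add_divide_distrib algebra_simps)
  finally show ?thesis
    unfolding a_def b_def c_def d_def .
qed

lemma subgrad_at_step_bounded: "step_bounded (\<lambda>k. norm (subgrad_at k))"
proof -
  obtain B\<psi> where B\<psi>: "\<And>k. k \<ge> K0 + 1 \<Longrightarrow> psi_at k \<le> B\<psi>"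
    using psi_at_bounded by blast
  have "0 \<le> B\<psi>"
    using psi_at_pos[of K0] B\<psi>[of "Suc K0"] by simp
  obtain Ry where Ry: "\<And>k. k \<ge> 1 \<Longrightarrow> norm (y (Suc k)) \<le> Ry"
    using y_bounded by blast
  obtain BK where BK: "BK > 0" "\<And>v. norm (K v) \<le> BK * norm v"
    using linear_bounded_pos[OF lin(2)] by blast
  obtain BA' where BA': "BA' > 0" "\<And>v. norm (adjoint A v) \<le> BA' * norm v"
    using linear_bounded_pos[OF adjoint_linear[OF lin(1)]] by blast
  obtain BK' where BK': "BK' > 0" "\<And>v. norm (adjoint K v) \<le> BK' * norm v"
    using linear_bounded_pos[OF adjoint_linear[OF lin(2)]] by blast
  define Ca Cb Cc where "Ca = (L + B\<psi> / m * BK) / m" and "Cb = (\<delta> + \<delta> * (\<bar>1 - \<beta>\<bar> / \<beta>)) / m"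
    and "Cc = BA' / m"
  have "step_bounded (\<lambda>k. Ca * norm (x k - x (Suc k)) + Cb * norm (u k - u (Suc k))
      + Cc * norm (z k - z (Suc k)) + BK' * Ry / m * \<bar>\<theta> k - ratio (Suc k)\<bar>)"
  proof (rule step_bounded_add)
    show "step_bounded (\<lambda>k. Ca * norm (x k - x (Suc k)) + Cb * norm (u k - u (Suc k))
        + Cc * norm (z k - z (Suc k)))"
      using L_nonneg \<open>0 \<le> B\<psi>\<close> BK(1) m \<delta> BA'(1) \<beta>(1)
      by (intro step_bounded_linear[of Ca Cb Cc]) (auto simp: Ca_def Cb_def Cc_def)
    show "step_bounded (\<lambda>k. BK' * Ry / m * \<bar>\<theta> k - ratio (Suc k)\<bar>)"
      by (rule step_bounded_mult[OF _ _ theta_step_bounded]) auto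
  qed
  then show ?thesis
    using subgrad_at_norm_le[OF _ B\<psi> \<open>0 \<le> B\<psi>\<close> Ry BK(2) BA'(2) BK'(2,1)]
    unfolding Ca_def Cb_def Cc_def by (rule step_bounded_mono[rotated])
qed

theorem dist_lsubdiff_step_bounded:
  "\<exists>\<zeta>>0. \<forall>k\<ge>K1. dist0 (lsubdiff (Gamma S A K g f h \<delta> \<gamma> m) (x (Suc k), y (Suc k), z (Suc k), u (Suc k)))
                     \<le> ereal (\<zeta> * step k)"
proof -
  obtain C where C: "\<And>k. k \<ge> K1 \<Longrightarrow> norm (subgrad_at k) \<le> C * step k"
    using subgrad_at_step_bounded unfolding step_bounded_def by blast
  have "dist0 (lsubdiff (Gamma S A K g f h \<delta> \<gamma> m) (x (Suc k), y (Suc k), z (Suc k), u (Suc k)))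
      \<le> ereal (max C 1 * step k)" if "k \<ge> K1" for k
  proof -
    have "norm (subgrad_at k) \<le> max C 1 * step k"
      using C[OF that] mult_right_mono[OF max.cobounded1 step_nonneg] by (rule order_trans)
    then show ?thesis
      using dist0_le_norm[OF subsetD[OF fsubdiff_subset_lsubdiff subgrad_at_fsubdiff[OF that]]]
      by (meson ereal_less_eq(3) order_trans)
  qed
  then show ?thesis
    by (intro exI[of _ "max C 1"]) auto
qed

end

theorem theorem6p2:
  fixes S :: "'n::euclidean_space set"
    and A :: "'n \<Rightarrow> 's::euclidean_space" and K :: "'n \<Rightarrow> 'p::euclidean_space"
    and g :: "'s \<Rightarrow> ereal" and f :: "'p \<Rightarrow> ereal"
    and h :: "'n \<Rightarrow> real" and gradh :: "'n \<Rightarrow> 'n" and L :: real and ell :: real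
    and \<beta> \<nu> q \<epsilon> :: real
    and x u :: "nat \<Rightarrow> 'n" and y :: "nat \<Rightarrow> 'p" and z :: "nat \<Rightarrow> 's"
    and \<theta> \<delta>s \<gamma>s :: "nat \<Rightarrow> real" and j :: "nat \<Rightarrow> nat"
    and \<gamma> m M :: real and K0 K1 :: nat
  assumes S: "S \<noteq> {}" "convex S" "compact S"
    and lin: "linear A" "linear K"
    and g: "proper_fun g" "convex_fun g" "lsc_fun g"
    and h: "\<exists>U. open U \<and> S \<subseteq> U \<and> (\<forall>v\<in>U. (h has_derivative (\<lambda>w. inner (gradh v) w)) (at v))
              \<and> (\<forall>v\<in>U. \<forall>w\<in>U. norm (gradh v - gradh w) \<le> L * norm (v - w))"
    and f: "proper_fun f" "convex_fun f" "lsc_fun f"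
    and fdom: "K ` S \<subseteq> interior (edom f)"
    and fpos: "\<forall>v\<in>S. f (K v) > 0"
    and gdom: "S \<inter> A -` edom g \<noteq> {}"
    and infpos: "(INF v\<in>S. g (A v) + ereal (h v)) > 0"
    and gsub: "A ` S \<subseteq> {w. csubdiff g w \<noteq> {}}"
    and ell: "ell > 0" "\<forall>v\<in>S. infdist 0 (csubdiff g (A v)) \<le> ell"
    \<comment> \<open>algorithm parameters\<close>
    and par: "0 < \<beta>" "\<beta> < 2" "\<nu> > 0" "0 < q" "q < 1" "\<delta>s 0 > 0" "\<theta> 0 > 0" "\<gamma>s 0 = 1" "\<epsilon> > 0"
    \<comment> \<open>algorithm iterations\<close>
    and it_y: "\<forall>k. y (Suc k) \<in> csubdiff f (K (x k))"
    and it_x: "\<forall>k. x (Suc k) = closest_point S (u k + (\<theta> k / \<delta>s k) *\<^sub>R adjoint K (y (Suc k))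
                   - (1 / \<delta>s k) *\<^sub>R gradh (x k) - (1 / \<delta>s k) *\<^sub>R adjoint A (z k))"
    and it_u: "\<forall>k. u (Suc k) = (1 - \<beta>) *\<^sub>R u k + \<beta> *\<^sub>R x (Suc k)"
    and it_j: "\<forall>k. Psi S A g h (x (Suc k))
                      (prox (fconj g) (1 / (\<gamma>s k * q ^ j k)) ((1 / (\<gamma>s k * q ^ j k)) *\<^sub>R A (x (Suc k))))
                      (u (Suc k)) (\<delta>s k) (\<gamma>s k * q ^ j k) / f (K (x (Suc k))) > 0
                 \<and> (\<forall>i < j k. \<not> (Psi S A g h (x (Suc k))
                      (prox (fconj g) (1 / (\<gamma>s k * q ^ i)) ((1 / (\<gamma>s k * q ^ i)) *\<^sub>R A (x (Suc k))))
                      (u (Suc k)) (\<delta>s k) (\<gamma>s k * q ^ i) / f (K (x (Suc k))) > 0))"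
    and it_z: "\<forall>k. z (Suc k) = prox (fconj g) (1 / (\<gamma>s k * q ^ j k)) ((1 / (\<gamma>s k * q ^ j k)) *\<^sub>R A (x (Suc k)))"
    and it_theta: "\<forall>k. ereal (\<theta> (Suc k)) =
                   Psi S A g h (x (Suc k)) (z (Suc k)) (u (Suc k)) (\<delta>s k) (\<gamma>s k * q ^ j k) / f (K (x (Suc k)))"
    and it_gamma: "\<forall>k. \<gamma>s (Suc k) =
                   (if norm (z (Suc k)) > min (\<epsilon> / (\<gamma>s k * q ^ j k)) (sqrt (2 * \<epsilon> / (\<gamma>s k * q ^ j k)))
                    then \<gamma>s k * q ^ j k * q else \<gamma>s k * q ^ j k)"
    and it_delta: "\<forall>k. \<delta>s (Suc k) = 2 * \<nu> + L + 2 * (onorm A)\<^sup>2 / \<gamma>s (Suc k)"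
    \<comment> \<open>hypotheses of the theorem\<close>
    and gam: "\<gamma> > 0"
    and stab: "\<forall>k\<ge>K0. \<gamma>s k = \<gamma> \<and> \<delta>s k = 2 * \<nu> + L + 2 * (onorm A)\<^sup>2 / \<gamma>
                   \<and> norm (z (Suc k)) \<le> min (\<epsilon> / \<gamma>) (sqrt (2 * \<epsilon> / \<gamma>))"
    and mM: "0 < m" "m \<le> M" "\<forall>k\<ge>1. ereal m < f (K (x k)) \<and> f (K (x k)) \<le> ereal M"
    and K1: "K1 \<ge> K0 + 1"
    and K1b: "\<forall>k\<ge>K1. ereal m \<le> ereal (inner (K (x k)) (y k)) - fconj f (y k)
                  \<and> ereal (inner (K (x k)) (y k)) - fconj f (y k) \<le> f (K (x k))
                  \<and> f (K (x k)) \<le> ereal M"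
    and calm: "\<forall>w\<in>edom (fconj f). calm_at (fconj f) w"
    and esc: "ess_strictly_convex g"
  shows "\<exists>\<zeta>>0. \<forall>k\<ge>K1.
           dist0 (lsubdiff (Gamma S A K g f h (2 * \<nu> + L + 2 * (onorm A)\<^sup>2 / \<gamma>) \<gamma> m)
                      (x (Suc k), y (Suc k), z (Suc k), u (Suc k)))
           \<le> ereal (\<zeta> * (norm (x k - x (Suc k)) + norm (u k - u (Suc k)) + norm (z k - z (Suc k))))"
proof -
  \<comment> \<open>Calmness of \<open>f\<^sup>*\<close>, lower semicontinuity of \<open>f\<close>, the hypotheses \<open>ell\<close>, \<open>gsub\<close>, \<open>gdom\<close>,
    \<open>infpos\<close>, \<open>fpos\<close>, the bound \<open>M\<close> and the initial values are not needed: \<open>f\<^sup>*\<close> only has to be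
    bounded below near \<open>y\<^sub>k\<^sub>+\<^sub>1\<close>, which its subgradient \<open>K x\<^sub>k\<close> provides, and the line search
    already guarantees \<open>\<Psi> > 0\<close> at the iterates.\<close>
  obtain U where U: "open U" "S \<subseteq> U"
    and hder: "\<And>v. v \<in> U \<Longrightarrow> (h has_derivative (\<lambda>w. inner (gradh v) w)) (at v)"
    and hlip: "\<And>v w. v \<in> U \<Longrightarrow> w \<in> U \<Longrightarrow> norm (gradh v - gradh w) \<le> L * norm (v - w)"
    using h by blast
  define \<delta> where "\<delta> = 2 * \<nu> + L + 2 * (onorm A)\<^sup>2 / \<gamma>"
  have "0 \<le> L"
    using lipschitz_constant_nonneg[OF U(1) _ hlip] S(1) U(2) by blast
  then have "\<delta> > 0"
    unfolding \<delta>_def using par(3) gam by (simp add: add_pos_nonneg)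
  interpret stabilized_iteration S A K g f h gradh U L \<beta> q x u y z \<theta> \<delta>s \<gamma>s j \<gamma> \<delta> m
      "min (\<epsilon> / \<gamma>) (sqrt (2 * \<epsilon> / \<gamma>))" K0 K1
  proof (rule stabilized_iteration.intro)
    show "\<And>k. \<gamma>s (Suc k) \<in> {\<gamma>s k * q ^ j k, \<gamma>s k * q ^ j k * q}"
      using it_gamma by simp
    show "\<And>k. K0 \<le> k \<Longrightarrow> \<gamma>s k = \<gamma> \<and> \<delta>s k = \<delta> \<and> norm (z (Suc k)) \<le> min (\<epsilon> / \<gamma>) (sqrt (2 * \<epsilon> / \<gamma>))"
      using stab unfolding \<delta>_def by blast
    show "\<And>k. 1 \<le> k \<Longrightarrow> ereal m < f (K (x k))"
      using mM(3) by blast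
    show "\<And>k. K1 \<le> k \<Longrightarrow> ereal m \<le> ereal (inner (K (x k)) (y k)) - fconj f (y k)"
      using K1b by blast
    show "\<And>k. Psi S A g h (x (Suc k))
        (prox (fconj g) (1 / (\<gamma>s k * q ^ j k)) ((1 / (\<gamma>s k * q ^ j k)) *\<^sub>R A (x (Suc k))))
        (u (Suc k)) (\<delta>s k) (\<gamma>s k * q ^ j k) / f (K (x (Suc k))) > 0"
      using it_j by blast
  qed (fact S lin g esc f(1,2) fdom U hder hlip par(1,2,4,5) gam \<open>\<delta> > 0\<close> mM(1) K1
      it_y[rule_format] it_x[rule_format] it_u[rule_format] it_z[rule_format] it_theta[rule_format])+
  show ?thesis
    using dist_lsubdiff_step_bounded unfolding step_def \<delta>_def by blast
qed

end
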